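(* Let $L\ne\{0,1\}$ be a sharp C-lattice domain in which every element is a join of principal elements. Then for every maximal element $m$ of $L$, the localization $L_m$ is isomorphic to $\mathbb{Z}_-$ or to $\mathbb{R}_1$, and $L$ is a one-dimensional Prüfer lattice (every compact element is principal, and every nonzero prime element is maximal).
   Context: A multiplicative lattice is a complete lattice $(L,\le)$ with bottom $0$ and top $1$ which is also a commutative monoid with identity $1$ such that $a(\bigvee_\alpha b_\alpha)=\bigvee_\alpha(ab_\alpha)$ for all $a,b_\alpha\in L$. For $x,y\in L$, $(y:x)=\bigvee\{a\in L: ax\le y\}$. An element $c$ is compact if $c\le\bigvee S$ implies $c\le\bigvee T$ for some finite $T\subseteq S$. A C-lattice is a multiplicative lattice in which $1$ is compact, the product of two compact elements is compact, and every element is a join of compact elements; $L^*$ denotes its compact elements. A proper element $p\ne1$ is prime if $xy\le p$ implies $x\le p$ or $y\le p$; maximal elements are maximal in $L\setminus\{1\}$; $L$ is a domain if $0$ is prime. An element $x$ is principal if $y\wedge zx=((y:x)\wedge z)x$ and $y\vee(z:x)=((yx\vee z):x)$ for all $y,z\in L$. $L$ is sharp if whenever $a_1a_2\le b$ with $a_1,a_2,b\in L$, there exist $b_1,b_2\in L$ with $a_i\le b_i$ ($i=1,2$) and $b=b_1b_2$. For $p$ prime and $x\in L$, $x_p=\bigvee\{a\in L^*: as\le x \text{ for some } s\in L^*,\ s\not\le p\}$, and $L_p=\{x_p:x\in L\}$ is a lattice with multiplication $(x,y)\mapsto(xy)_p$ and the induced order. $\mathbb{Z}_-$ is the set of integers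 $\le0$ together with $-\infty$, with the usual order and addition as multiplication. $\mathbb{R}_1$ is the set of all intervals $(r,\infty]$ and $[r,\infty]$ with $r\ge0$ real, together with $\{\infty\}$, ordered by inclusion with interval addition as multiplication (isomorphic to the ideal lattice of a valuation domain with value group $\mathbb{R}$). *)

theory Defs
  imports Main "HOL-Library.Extended_Real"
begin

text \<open>A multiplicative lattice is represented by a complete lattice type 'a
(bottom = 0, top = 1) together with an explicit multiplication mul.\<close>

definition mult_lattice :: "('a::complete_lattice \<Rightarrow> 'a \<Rightarrow> 'a) \<Rightarrow> bool" where
  "mult_lattice mul \<longleftrightarrow>
     (\<forall>a b c. mul (mul a b) c = mul a (mul b c)) \<and>
     (\<forall>a b. mul a b = mul b a) \<and>
     (\<forall>a. mul top a = a) \<and>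
     (\<forall>a S. mul a (Sup S) = Sup ((\<lambda>b. mul a b) ` S))"

definition res :: "('a::complete_lattice \<Rightarrow> 'a \<Rightarrow> 'a) \<Rightarrow> 'a \<Rightarrow> 'a \<Rightarrow> 'a" where
  "res mul y x = Sup {a. mul a x \<le> y}"

definition compact_el :: "'a::complete_lattice \<Rightarrow> bool" where
  "compact_el c \<longleftrightarrow> (\<forall>S. c \<le> Sup S \<longrightarrow> (\<exists>T. finite T \<and> T \<subseteq> S \<and> c \<le> Sup T))"

definition C_lattice :: "('a::complete_lattice \<Rightarrow> 'a \<Rightarrow> 'a) \<Rightarrow> bool" where
  "C_lattice mul \<longleftrightarrow> mult_lattice mul \<and> compact_el (top::'a) \<and>
     (\<forall>a b. compact_el a \<and> compact_el b \<longrightarrow> compact_el (mul a b)) \<and>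
     (\<forall>x::'a. \<exists>S. (\<forall>s\<in>S. compact_el s) \<and> x = Sup S)"

definition prime_el :: "('a::complete_lattice \<Rightarrow> 'a \<Rightarrow> 'a) \<Rightarrow> 'a \<Rightarrow> bool" where
  "prime_el mul p \<longleftrightarrow> p \<noteq> top \<and> (\<forall>x y. mul x y \<le> p \<longrightarrow> x \<le> p \<or> y \<le> p)"

definition maximal_el :: "'a::complete_lattice \<Rightarrow> bool" where
  "maximal_el m \<longleftrightarrow> m \<noteq> top \<and> (\<forall>x. m \<le> x \<longrightarrow> x = m \<or> x = top)"

definition lattice_domain :: "('a::complete_lattice \<Rightarrow> 'a \<Rightarrow> 'a) \<Rightarrow> bool" where
  "lattice_domain mul \<longleftrightarrow> prime_el mul bot"

definition principal_el :: "('a::complete_lattice \<Rightarrow> 'a \<Rightarrow> 'a) \<Rightarrow> 'a \<Rightarrow> bool" where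
  "principal_el mul x \<longleftrightarrow>
     (\<forall>y z. inf y (mul z x) = mul (inf (res mul y x) z) x \<and>
            sup y (res mul z x) = res mul (sup (mul y x) z) x)"

definition sharp :: "('a::complete_lattice \<Rightarrow> 'a \<Rightarrow> 'a) \<Rightarrow> bool" where
  "sharp mul \<longleftrightarrow> (\<forall>a1 a2 b. mul a1 a2 \<le> b \<longrightarrow>
      (\<exists>b1 b2. a1 \<le> b1 \<and> a2 \<le> b2 \<and> b = mul b1 b2))"

text \<open>Localization at a prime p: x_p, carrier L_p, multiplication (xy)_p,
  order induced from L.\<close>

definition loc :: "('a::complete_lattice \<Rightarrow> 'a \<Rightarrow> 'a) \<Rightarrow> 'a \<Rightarrow> 'a \<Rightarrow> 'a" where
  "loc mul p x = Sup {a. compact_el a \<and>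
       (\<exists>s. compact_el s \<and> \<not> s \<le> p \<and> mul a s \<le> x)}"

definition loc_carrier :: "('a::complete_lattice \<Rightarrow> 'a \<Rightarrow> 'a) \<Rightarrow> 'a \<Rightarrow> 'a set" where
  "loc_carrier mul p = range (loc mul p)"

definition loc_mul :: "('a::complete_lattice \<Rightarrow> 'a \<Rightarrow> 'a) \<Rightarrow> 'a \<Rightarrow> 'a \<Rightarrow> 'a \<Rightarrow> 'a" where
  "loc_mul mul p x y = loc mul p (mul x y)"

definition mlat_iso ::
  "'a set \<Rightarrow> ('a \<Rightarrow> 'a \<Rightarrow> bool) \<Rightarrow> ('a \<Rightarrow> 'a \<Rightarrow> 'a) \<Rightarrow>
   'b set \<Rightarrow> ('b \<Rightarrow> 'b \<Rightarrow> bool) \<Rightarrow> ('b \<Rightarrow> 'b \<Rightarrow> 'b) \<Rightarrow> ('a \<Rightarrow> 'b) \<Rightarrow> bool" where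
  "mlat_iso A leA mA B leB mB f \<longleftrightarrow> bij_betw f A B \<and>
     (\<forall>x\<in>A. \<forall>y\<in>A. leB (f x) (f y) \<longleftrightarrow> leA x y) \<and>
     (\<forall>x\<in>A. \<forall>y\<in>A. f (mA x y) = mB (f x) (f y))"

definition mlat_isomorphic ::
  "'a set \<Rightarrow> ('a \<Rightarrow> 'a \<Rightarrow> bool) \<Rightarrow> ('a \<Rightarrow> 'a \<Rightarrow> 'a) \<Rightarrow>
   'b set \<Rightarrow> ('b \<Rightarrow> 'b \<Rightarrow> bool) \<Rightarrow> ('b \<Rightarrow> 'b \<Rightarrow> 'b) \<Rightarrow> bool" where
  "mlat_isomorphic A leA mA B leB mB \<longleftrightarrow> (\<exists>f. mlat_iso A leA mA B leB mB f)"

text \<open>Z_-: integers \<le> 0 together with -\<infinity>, usual order, addition as multiplication.\<close>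

definition Zminus :: "ereal set" where
  "Zminus = {ereal (of_int n) | n::int. n \<le> 0} \<union> {-\<infinity>}"

text \<open>R_1: intervals (r,\<infinity>] and [r,\<infinity>] (r \<ge> 0 real) and {\<infinity>}, ordered by
  inclusion, with interval (Minkowski) addition as multiplication.\<close>

definition R1 :: "ereal set set" where
  "R1 = {{x. ereal r < x} | r. r \<ge> 0} \<union> {{x. ereal r \<le> x} | r. r \<ge> 0} \<union> {{\<infinity>}}"

definition set_add :: "ereal set \<Rightarrow> ereal set \<Rightarrow> ereal set" where
  "set_add A B = {x + y | x y. x \<in> A \<and> y \<in> B}"

definition Pruefer_1dim :: "('a::complete_lattice \<Rightarrow> 'a \<Rightarrow> 'a) \<Rightarrow> bool" where
  "Pruefer_1dim mul \<longleftrightarrow> (\<forall>c::'a. compact_el c \<longrightarrow> principal_el mul c) \<and>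
     (\<forall>p::'a. prime_el mul p \<and> p \<noteq> bot \<longrightarrow> maximal_el p)"

end

(*
  Principal elements are compact because top is, and sharpness applied to
  x y \<ge> (x \<squnion> y)(x \<sqinter> y) writes any two nonzero principal elements as x' z, y' z
  with x' \<squnion> y' = top.  Hence, after localizing at a prime p, principal elements
  are totally ordered, and by the local-global principle finite joins of principal
  elements are principal: compact elements are principal.  Sharpness also gives an
  Archimedean property (no nonzero principal element lies locally below all powers
  of a principal q \<le> p), which forces nonzero primes to be maximal.

  Fixing a nonzero principal t \<le> p, val q = sup {a/b. t^a divides q^b locally} is
  additive on nonzero principal elements and determines their local order.  An
  element of L_p is thus determined by the up-closed set of values of the principal
  elements below it, products becoming sums.  The values form \<nat> when p is locally
  generated by one principal element; otherwise sharpness splits powers of t into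
  factors of any prescribed nonnegative value, so they form [0,\<infinity>).  The two cases
  give L_p \<cong> Z_- and L_p \<cong> R_1.
*)

theory Submission
  imports Defs "HOL-Library.Set_Algebras"
begin

lemma finite_chain_Sup_in:
  fixes F :: "'a::complete_lattice set"
  assumes "finite F" "F \<noteq> {}" and chain: "\<And>a b. a \<in> F \<Longrightarrow> b \<in> F \<Longrightarrow> a \<le> b \<or> b \<le> a"
  shows "Sup F \<in> F"
  using assms(1,2) chain
proof (induction F rule: finite_ne_induct)
  case (insert x F)
  then have "Sup F \<in> F" by blast
  moreover have "x \<le> Sup F \<or> Sup F \<le> x" using insert.prems calculation by blast
  ultimately show ?case by (auto simp: sup_absorb1 sup_absorb2)
qed simp

lemma compact_bot: "compact_el bot"
  unfolding compact_el_def by (intro allI impI exI[of _ "{}"]) simp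

lemma compact_sup:
  assumes a: "compact_el a" and b: "compact_el b"
  shows "compact_el (sup a b)"
  unfolding compact_el_def
proof (intro allI impI)
  fix S assume ab: "sup a b \<le> Sup S"
  obtain T1 where T1: "finite T1" "T1 \<subseteq> S" "a \<le> Sup T1"
    using a ab unfolding compact_el_def by auto
  obtain T2 where T2: "finite T2" "T2 \<subseteq> S" "b \<le> Sup T2"
    using b ab unfolding compact_el_def by auto
  have "sup a b \<le> Sup (T1 \<union> T2)"
    using T1(3) T2(3) by (auto simp: Sup_union_distrib intro: le_supI1 le_supI2)
  then show "\<exists>T. finite T \<and> T \<subseteq> S \<and> sup a b \<le> Sup T"
    using T1 T2 by (intro exI[of _ "T1 \<union> T2"]) auto
qed

lemma compact_Sup_finite: "finite T \<Longrightarrow> \<forall>t\<in>T. compact_el t \<Longrightarrow> compact_el (Sup T)"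
  by (induction T rule: finite_induct) (auto simp: compact_bot compact_sup)

lemma real_le_if_le_add_div:
  fixes x y c :: real
  assumes "\<And>N::nat. 0 < N \<Longrightarrow> x \<le> y + c / real N"
  shows "x \<le> y"
proof (rule ccontr)
  assume "\<not> x \<le> y"
  obtain N :: nat where N: "max 1 (c / (x - y)) < N" using reals_Archimedean2 by blast
  then have "c < real N * (x - y)" using \<open>\<not> x \<le> y\<close> by (simp add: divide_less_eq mult.commute)
  then have "c / real N < x - y" using N by (simp add: divide_less_eq mult.commute)
  then show False using assms[of N] N by simp
qed

locale multiplicative_lattice =
  fixes mul :: "'a::complete_lattice \<Rightarrow> 'a \<Rightarrow> 'a" (infixl "\<cdot>" 70)
  assumes mult_lattice: "mult_lattice mul"
begin

(* y \<div> x is the residual (y : x); it binds more weakly than \<cdot>, so y \<cdot> x \<div> x = (y \<cdot> x) \<div> x. *)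
abbreviation residual :: "'a \<Rightarrow> 'a \<Rightarrow> 'a" (infixl "\<div>" 65) where "y \<div> x \<equiv> res mul y x"

sublocale mul: abel_semigroup mul
  using mult_lattice unfolding mult_lattice_def by unfold_locales blast+

lemmas mul_ac = mul.assoc mul.commute mul.left_commute

lemma top_mul [simp]: "top \<cdot> a = a"
  using mult_lattice unfolding mult_lattice_def by blast

lemma mul_top [simp]: "a \<cdot> top = a"
  by (simp add: mul.commute)

lemma mul_Sup: "a \<cdot> Sup S = (SUP b\<in>S. a \<cdot> b)"
  using mult_lattice unfolding mult_lattice_def by blast

lemma Sup_mul: "Sup S \<cdot> a = (SUP b\<in>S. b \<cdot> a)"
  by (simp add: mul.commute[of _ a] mul_Sup)

lemma mul_bot [simp]: "a \<cdot> bot = bot"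
  using mul_Sup[of a "{}"] by simp

lemma bot_mul [simp]: "bot \<cdot> a = bot"
  by (metis mul_bot mul.commute)

lemma mul_sup: "a \<cdot> sup b c = sup (a \<cdot> b) (a \<cdot> c)"
  using mul_Sup[of a "{b, c}"] by simp

lemma sup_mul: "sup b c \<cdot> a = sup (b \<cdot> a) (c \<cdot> a)"
  by (simp add: mul.commute[of _ a] mul_sup)

lemma mul_left_mono: "b \<le> c \<Longrightarrow> a \<cdot> b \<le> a \<cdot> c"
  by (metis mul_sup sup.absorb_iff2)

lemma mul_right_mono: "b \<le> c \<Longrightarrow> b \<cdot> a \<le> c \<cdot> a"
  by (simp add: mul.commute[of _ a] mul_left_mono)

lemma mul_mono: "a \<le> b \<Longrightarrow> c \<le> d \<Longrightarrow> a \<cdot> c \<le> b \<cdot> d"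
  by (meson mul_left_mono mul_right_mono order_trans)

lemma mul_le_left: "a \<cdot> b \<le> a"
  using mul_left_mono[of b top a] by simp

lemma mul_le_right: "a \<cdot> b \<le> b"
  using mul_right_mono[of a top b] by simp

lemma Sup_mul_Sup: "Sup A \<cdot> Sup B = Sup {a \<cdot> b |a b. a \<in> A \<and> b \<in> B}"
  unfolding Sup_mul mul_Sup by (rule order.antisym) (auto intro!: Sup_least Sup_upper2 SUP_upper2)

lemma le_res_iff: "a \<le> y \<div> x \<longleftrightarrow> a \<cdot> x \<le> y"
proof
  assume "a \<le> y \<div> x"
  then have "a \<cdot> x \<le> (y \<div> x) \<cdot> x" by (rule mul_right_mono)
  also have "\<dots> \<le> y" unfolding res_def Sup_mul by (auto intro: SUP_least)
  finally show "a \<cdot> x \<le> y" .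
qed (auto simp: res_def intro: Sup_upper)

lemma res_mul_le: "(y \<div> x) \<cdot> x \<le> y"
  using le_res_iff by blast

lemma res_res: "y \<div> a \<div> b = y \<div> (a \<cdot> b)"
proof -
  have "c \<le> y \<div> a \<div> b \<longleftrightarrow> c \<le> y \<div> (a \<cdot> b)" for c
    by (simp add: le_res_iff mul_ac)
  then show ?thesis by (meson order.antisym order.refl)
qed

lemma res_self: "x \<div> x = top"
  by (simp add: le_res_iff top_unique[symmetric])

lemma maximal_el_imp_prime_el:
  assumes "maximal_el m"
  shows "prime_el mul m"
  unfolding prime_el_def
proof (intro conjI allI impI)
  show "m \<noteq> top" using assms unfolding maximal_el_def by blast
  fix x y assume xy: "x \<cdot> y \<le> m"
  show "x \<le> m \<or> y \<le> m"
  proof (cases "x \<le> m")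
    case False
    then have "sup m x = top" using assms unfolding maximal_el_def by (metis sup.cobounded1 sup.orderI)
    then have "y = sup (m \<cdot> y) (x \<cdot> y)" by (metis sup_mul top_mul)
    also have "\<dots> \<le> m" using xy mul_le_left[of m y] by simp
    finally show ?thesis ..
  qed simp
qed

lemma principal_inf_mul: "principal_el mul x \<Longrightarrow> inf y (z \<cdot> x) = inf (y \<div> x) z \<cdot> x"
  unfolding principal_el_def by blast

lemma principal_sup_res: "principal_el mul x \<Longrightarrow> sup y (z \<div> x) = sup (y \<cdot> x) z \<div> x"
  unfolding principal_el_def by blast

lemma principal_inf: "principal_el mul x \<Longrightarrow> inf y x = (y \<div> x) \<cdot> x"
  using principal_inf_mul[of x y top] by simp

lemma principal_res_mul: "principal_el mul x \<Longrightarrow> y \<le> x \<Longrightarrow> (y \<div> x) \<cdot> x = y"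
  using principal_inf[of x y] by (simp add: inf_absorb1)

lemma principal_mul:
  assumes a: "principal_el mul a" and b: "principal_el mul b"
  shows "principal_el mul (a \<cdot> b)"
  unfolding principal_el_def
proof (intro allI conjI)
  fix y z
  have "inf y (z \<cdot> (a \<cdot> b)) = inf y (z \<cdot> b \<cdot> a)" by (simp add: mul_ac)
  also have "\<dots> = inf (y \<div> a \<div> b) z \<cdot> b \<cdot> a"
    using principal_inf_mul[OF a] principal_inf_mul[OF b] by simp
  finally show "inf y (z \<cdot> (a \<cdot> b)) = inf (y \<div> (a \<cdot> b)) z \<cdot> (a \<cdot> b)"
    by (simp add: mul_ac res_res)
  have "sup y (z \<div> (a \<cdot> b)) = sup y (z \<div> a \<div> b)" by (simp add: res_res)
  also have "\<dots> = sup (y \<cdot> b \<cdot> a) z \<div> a \<div> b"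
    using principal_sup_res[OF a] principal_sup_res[OF b] by simp
  finally show "sup y (z \<div> (a \<cdot> b)) = sup (y \<cdot> (a \<cdot> b)) z \<div> (a \<cdot> b)"
    by (simp add: mul_ac res_res)
qed

lemma principal_top: "principal_el mul top"
  unfolding principal_el_def by (metis inf_top.right_neutral mul_top order_refl le_res_iff order.antisym)

lemma res_bot [simp]: "z \<div> bot = top"
  by (simp add: le_res_iff top_unique[symmetric])

lemma principal_bot: "principal_el mul bot"
  unfolding principal_el_def by simp

lemma sup_mul_inf_le: "sup x y \<cdot> inf x y \<le> x \<cdot> y"
proof -
  have "x \<cdot> inf x y \<le> x \<cdot> y" "y \<cdot> inf x y \<le> x \<cdot> y"
    using mul_left_mono[of "inf x y" y x] mul_left_mono[of "inf x y" x y] by (simp_all add: mul.commute)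
  then show ?thesis by (simp add: sup_mul)
qed

primrec mpow :: "'a \<Rightarrow> nat \<Rightarrow> 'a" where
  "mpow a 0 = top"
| "mpow a (Suc n) = a \<cdot> mpow a n"

lemma mpow_add: "mpow a (i + j) = mpow a i \<cdot> mpow a j"
  by (induction i) (auto simp: mul.assoc)

lemma mpow_mul_distrib: "mpow (a \<cdot> b) n = mpow a n \<cdot> mpow b n"
  by (induction n) (auto simp: mul_ac)

lemma mpow_mult: "mpow (mpow a i) j = mpow a (i * j)"
  by (induction j) (auto simp: mpow_add[symmetric])

lemma mpow_top [simp]: "mpow top n = top"
  by (induction n) simp_all

lemma principal_mpow: "principal_el mul a \<Longrightarrow> principal_el mul (mpow a n)"
  by (induction n) (auto simp: principal_top principal_mul)

lemma prime_el_mpow_le: "prime_el mul p \<Longrightarrow> mpow q n \<le> p \<Longrightarrow> q \<le> p"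
  by (induction n) (auto simp: prime_el_def top_unique)

end

locale multiplicative_domain = multiplicative_lattice +
  assumes domain: "lattice_domain mul"
begin

lemma bot_neq_top: "bot \<noteq> (top::'a)"
  using domain unfolding lattice_domain_def prime_el_def by auto

lemma mul_eq_bot_iff: "a \<cdot> b = bot \<longleftrightarrow> a = bot \<or> b = bot"
  using domain unfolding lattice_domain_def prime_el_def by (metis bot_unique mul_bot bot_mul order_refl)

lemma mpow_neq_bot: "a \<noteq> bot \<Longrightarrow> mpow a n \<noteq> bot"
  by (induction n) (auto simp: bot_neq_top[symmetric] mul_eq_bot_iff)

lemma bot_res: "x \<noteq> bot \<Longrightarrow> bot \<div> x = bot"
  by (metis bot_unique le_res_iff mul_eq_bot_iff order_refl)

lemma principal_mul_res_cancel: "principal_el mul x \<Longrightarrow> x \<noteq> bot \<Longrightarrow> y \<cdot> x \<div> x = y"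
  using principal_sup_res[of x y bot] bot_res by simp

lemma principal_mul_le_cancel: "principal_el mul x \<Longrightarrow> x \<noteq> bot \<Longrightarrow> a \<cdot> x \<le> b \<cdot> x \<longleftrightarrow> a \<le> b"
  by (metis principal_mul_res_cancel le_res_iff mul_right_mono)

lemma principal_mul_cancel: "principal_el mul x \<Longrightarrow> x \<noteq> bot \<Longrightarrow> a \<cdot> x = b \<cdot> x \<longleftrightarrow> a = b"
  by (metis principal_mul_le_cancel order.antisym order.refl)

lemma principal_res_le: "principal_el mul x \<Longrightarrow> x \<noteq> bot \<Longrightarrow> inf z x \<le> z \<cdot> x \<Longrightarrow> z \<div> x \<le> z"
  by (metis principal_inf principal_mul_le_cancel)

lemma principal_mul_inf: "principal_el mul x \<Longrightarrow> x \<noteq> bot \<Longrightarrow> x \<cdot> inf a b = inf (x \<cdot> a) (x \<cdot> b)"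
  using principal_inf_mul[of x "x \<cdot> a" b] principal_mul_res_cancel[of x a] by (simp add: mul.commute)

lemma factor_of_principal_cancel:
  assumes ab: "a \<cdot> b = q" and q: "principal_el mul q" "q \<noteq> bot"
  shows "b \<cdot> s \<le> b \<cdot> u \<longleftrightarrow> s \<le> u"
proof
  assume "b \<cdot> s \<le> b \<cdot> u"
  then have "s \<cdot> q \<le> u \<cdot> q"
    using mul_left_mono[of "b \<cdot> s" "b \<cdot> u" a] by (simp add: ab[symmetric] mul_ac)
  then show "s \<le> u" using principal_mul_le_cancel[OF q] by blast
qed (rule mul_left_mono)

lemma factor_of_principal_inf_mul:
  assumes ab: "a \<cdot> b = q" and q: "principal_el mul q" "q \<noteq> bot"
  shows "inf y (z \<cdot> a) = inf (y \<div> a) z \<cdot> a"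
proof (rule order.antisym)
  note cancel = factor_of_principal_cancel[OF ab q]
  define u where "u = inf (b \<cdot> y \<div> q) z"
  have "b \<cdot> inf y (z \<cdot> a) \<le> inf (b \<cdot> y) (z \<cdot> q)"
    using mul_left_mono[of "inf y (z \<cdot> a)" y b] mul_left_mono[of "inf y (z \<cdot> a)" "z \<cdot> a" b]
    by (simp add: ab[symmetric] mul_ac)
  also have "\<dots> = b \<cdot> (u \<cdot> a)"
    unfolding u_def principal_inf_mul[OF q(1)] by (simp add: ab[symmetric] mul_ac)
  finally have "inf y (z \<cdot> a) \<le> u \<cdot> a" by (simp add: cancel)
  moreover have "b \<cdot> (u \<cdot> a) \<le> b \<cdot> y"
    using le_res_iff[of u "b \<cdot> y" q] by (simp add: u_def ab[symmetric] mul_ac)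
  then have "u \<le> inf (y \<div> a) z" by (simp add: cancel le_res_iff u_def)
  ultimately show "inf y (z \<cdot> a) \<le> inf (y \<div> a) z \<cdot> a"
    using mul_right_mono order_trans by blast
  show "inf (y \<div> a) z \<cdot> a \<le> inf y (z \<cdot> a)"
    using res_mul_le[of y a] mul_right_mono[of "inf (y \<div> a) z" "y \<div> a" a]
      mul_right_mono[of "inf (y \<div> a) z" z a] by auto
qed

lemma factor_of_principal_sup_res:
  assumes ab: "a \<cdot> b = q" and q: "principal_el mul q" "q \<noteq> bot"
  shows "sup y (z \<div> a) = sup (y \<cdot> a) z \<div> a"
proof (rule order.antisym)
  note cancel = factor_of_principal_cancel[OF ab q]
  show "sup y (z \<div> a) \<le> sup (y \<cdot> a) z \<div> a"
    using res_mul_le[of z a] by (auto simp: le_res_iff sup_mul intro: le_supI2)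
  have "b \<cdot> ((z \<cdot> b \<div> q) \<cdot> a) \<le> b \<cdot> z"
    using res_mul_le[of "z \<cdot> b" q] by (simp add: ab[symmetric] mul_ac)
  then have za: "z \<cdot> b \<div> q \<le> z \<div> a" by (simp add: cancel le_res_iff)
  have "(sup (y \<cdot> a) z \<div> a) \<cdot> q \<le> sup (y \<cdot> q) (z \<cdot> b)"
    using mul_right_mono[OF res_mul_le[of "sup (y \<cdot> a) z" a], of b]
    by (simp add: ab[symmetric] sup_mul mul_sup mul_ac)
  then have "sup (y \<cdot> a) z \<div> a \<le> sup y (z \<cdot> b \<div> q)"
    by (simp add: le_res_iff principal_sup_res[OF q(1)])
  with za show "sup (y \<cdot> a) z \<div> a \<le> sup y (z \<div> a)"
    by (meson order_trans sup_mono order_refl)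
qed

lemma principal_factor: "a \<cdot> b = q \<Longrightarrow> principal_el mul q \<Longrightarrow> q \<noteq> bot \<Longrightarrow> principal_el mul a"
  unfolding principal_el_def[of _ a]
  using factor_of_principal_inf_mul factor_of_principal_sup_res by blast

end

locale C_lat = multiplicative_lattice +
  assumes C_lattice: "C_lattice mul"
begin

lemma compact_top: "compact_el (top::'a)"
  and compact_mul: "compact_el a \<Longrightarrow> compact_el b \<Longrightarrow> compact_el (a \<cdot> b)"
  and compactly_generated: "\<exists>S. (\<forall>s\<in>S. compact_el s) \<and> (x::'a) = Sup S"
  using C_lattice unfolding C_lattice_def by auto

lemma Sup_compact_below: "Sup {c. compact_el c \<and> c \<le> x} = (x::'a)"
proof (rule order.antisym)
  obtain S where S: "\<forall>s\<in>S. compact_el s" "x = Sup S"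
    using compactly_generated by blast
  then have "S \<subseteq> {c. compact_el c \<and> c \<le> x}" by (auto intro: Sup_upper)
  with S(2) show "x \<le> Sup {c. compact_el c \<and> c \<le> x}" by (simp add: Sup_subset_mono)
qed (rule Sup_least, blast)

lemma sup_Sup_chain_neq_top:
  assumes x: "(x::'a) \<noteq> top" and C: "\<forall>c\<in>C. x \<le> c \<and> c \<noteq> top"
    and chain: "\<forall>a\<in>C. \<forall>b\<in>C. a \<le> b \<or> b \<le> a"
  shows "sup x (Sup C) \<noteq> top"
proof
  assume "sup x (Sup C) = top"
  then have "top \<le> Sup (insert x C)" by simp
  then obtain F where F: "finite F" "F \<subseteq> insert x C" "top \<le> Sup F"
    using compact_top unfolding compact_el_def by blast
  have "F \<noteq> {}"
  proof
    assume "F = {}"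
    have "top \<le> Sup F" by (rule F(3))
    also have "\<dots> = bot" using \<open>F = {}\<close> by simp
    also have "\<dots> \<le> x" by simp
    finally have "top \<le> x" .
    with x show False by (simp add: top_le)
  qed
  moreover have "a \<le> b \<or> b \<le> a" if "a \<in> insert x C" "b \<in> insert x C" for a b
    using that C chain by auto
  ultimately have "Sup F \<in> insert x C" using finite_chain_Sup_in[OF F(1)] F(2) by (meson subsetD)
  moreover have "Sup F = top" using F(3) by (rule top_unique[THEN iffD1])
  ultimately show False using x C by auto
qed

lemma ex_maximal_above:
  assumes "(x::'a) \<noteq> top"
  obtains m where "maximal_el m" "x \<le> m"
proof -
  define A where "A = {y. x \<le> y \<and> y \<noteq> top}"
  have "\<exists>m\<in>A. \<forall>a\<in>A. m \<le> a \<longrightarrow> a = m"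
  proof (rule predicate_Zorn)
    show "partial_order_on A (relation_of (\<le>) A)"
      by (rule partial_order_on_relation_ofI) auto
  next
    fix C assume C: "C \<in> Chains (relation_of (\<le>) A)"
    then have "C \<subseteq> A" by (rule Chains_relation_of)
    moreover have "\<forall>a\<in>C. \<forall>b\<in>C. a \<le> b \<or> b \<le> a"
      using C unfolding Chains_def relation_of_def by auto
    ultimately have "sup x (Sup C) \<noteq> top"
      by (intro sup_Sup_chain_neq_top[OF assms]) (auto simp: A_def)
    then have "sup x (Sup C) \<in> A" unfolding A_def by simp
    moreover have "\<forall>a\<in>C. a \<le> sup x (Sup C)" by (simp add: Sup_upper le_supI2)
    ultimately show "\<exists>u\<in>A. \<forall>a\<in>C. a \<le> u" by blast
  qed
  then obtain m where m: "m \<in> A" and max: "\<forall>a\<in>A. m \<le> a \<longrightarrow> a = m" by blast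
  have "y = m \<or> y = top" if "m \<le> y" for y
  proof (rule disjCI)
    assume "y \<noteq> top"
    with that m have "y \<in> A" unfolding A_def by (auto intro: order.trans)
    with max that show "y = m" by blast
  qed
  with m have "maximal_el m" "x \<le> m" unfolding maximal_el_def A_def by auto
  then show ?thesis by (rule that)
qed

(* a \<preceq>\<^bsub>p\<^esub> b says a\<^sub>p \<le> b\<^sub>p in the localization at p (see compact_le_loc_iff). *)
definition loc_le :: "'a \<Rightarrow> 'a \<Rightarrow> 'a \<Rightarrow> bool" ("(_ \<preceq>\<^bsub>_\<^esub> _)" [51, 0, 51] 50) where
  "a \<preceq>\<^bsub>p\<^esub> b \<longleftrightarrow> (\<exists>s. compact_el s \<and> \<not> s \<le> p \<and> s \<cdot> a \<le> b)"

lemma le_if_loc_le_maximal: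
  assumes "\<And>m. maximal_el m \<Longrightarrow> e \<preceq>\<^bsub>m\<^esub> b"
  shows "e \<le> b"
proof -
  have "b \<div> e = top"
  proof (rule ccontr)
    assume "b \<div> e \<noteq> top"
    then obtain m where "maximal_el m" "b \<div> e \<le> m" by (rule ex_maximal_above)
    with assms show False unfolding loc_le_def by (meson le_res_iff order_trans)
  qed
  then show ?thesis using le_res_iff[of top b e] by simp
qed

context
  fixes p :: 'a
  assumes prime: "prime_el mul p"
begin

lemma top_not_le_prime: "\<not> top \<le> p"
  using prime unfolding prime_el_def by (simp add: top_unique)

lemma loc_le_of_le: "a \<le> b \<Longrightarrow> a \<preceq>\<^bsub>p\<^esub> b"
  unfolding loc_le_def using compact_top top_not_le_prime by (metis top_mul)

lemma loc_le_refl: "a \<preceq>\<^bsub>p\<^esub> a"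
  by (simp add: loc_le_of_le)

lemma loc_le_trans: "a \<preceq>\<^bsub>p\<^esub> b \<Longrightarrow> b \<preceq>\<^bsub>p\<^esub> c \<Longrightarrow> a \<preceq>\<^bsub>p\<^esub> c"
  unfolding loc_le_def
proof (elim exE conjE)
  fix s t assume "compact_el s" "\<not> s \<le> p" "s \<cdot> a \<le> b" "compact_el t" "\<not> t \<le> p" "t \<cdot> b \<le> c"
  moreover have "t \<cdot> s \<cdot> a \<le> c"
    using mul_left_mono[of "s \<cdot> a" b t] calculation by (simp add: mul.assoc)
  ultimately show "\<exists>u. compact_el u \<and> \<not> u \<le> p \<and> u \<cdot> a \<le> c"
    using compact_mul prime unfolding prime_el_def by blast
qed

lemma loc_le_sup: "a \<preceq>\<^bsub>p\<^esub> c \<Longrightarrow> b \<preceq>\<^bsub>p\<^esub> c \<Longrightarrow> sup a b \<preceq>\<^bsub>p\<^esub> c"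
  unfolding loc_le_def
proof (elim exE conjE)
  fix s t assume st: "compact_el s" "\<not> s \<le> p" "s \<cdot> a \<le> c" "compact_el t" "\<not> t \<le> p" "t \<cdot> b \<le> c"
  have "t \<cdot> s \<cdot> a \<le> c"
    using order_trans[OF mul_le_right[of t "s \<cdot> a"] st(3)] by (simp add: mul.assoc)
  moreover have "t \<cdot> s \<cdot> b \<le> c"
    using order_trans[OF mul_le_right[of s "t \<cdot> b"] st(6)] by (simp add: mul_ac)
  ultimately have "t \<cdot> s \<cdot> sup a b \<le> c" by (simp add: mul_sup)
  with st show "\<exists>u. compact_el u \<and> \<not> u \<le> p \<and> u \<cdot> sup a b \<le> c"
    using compact_mul prime unfolding prime_el_def by blast
qed

lemma loc_le_Sup_finite: "finite T \<Longrightarrow> \<forall>t\<in>T. t \<preceq>\<^bsub>p\<^esub> b \<Longrightarrow> Sup T \<preceq>\<^bsub>p\<^esub> b"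
  by (induction T rule: finite_induct) (auto simp: loc_le_of_le loc_le_sup)

lemma loc_le_mul: "a \<preceq>\<^bsub>p\<^esub> b \<Longrightarrow> c \<preceq>\<^bsub>p\<^esub> d \<Longrightarrow> a \<cdot> c \<preceq>\<^bsub>p\<^esub> b \<cdot> d"
proof -
  have right: "x \<preceq>\<^bsub>p\<^esub> y \<Longrightarrow> x \<cdot> z \<preceq>\<^bsub>p\<^esub> y \<cdot> z" for x y z
    unfolding loc_le_def by (metis mul.assoc mul_right_mono)
  assume "a \<preceq>\<^bsub>p\<^esub> b" "c \<preceq>\<^bsub>p\<^esub> d"
  then have "a \<cdot> c \<preceq>\<^bsub>p\<^esub> b \<cdot> c" "c \<cdot> b \<preceq>\<^bsub>p\<^esub> d \<cdot> b" by (blast intro: right)+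
  then show ?thesis
    by (simp only: mul.commute[of c] mul.commute[of d]) (rule loc_le_trans)
qed

lemma loc_le_mpow: "a \<preceq>\<^bsub>p\<^esub> b \<Longrightarrow> mpow a n \<preceq>\<^bsub>p\<^esub> mpow b n"
  by (induction n) (simp_all add: loc_le_refl loc_le_mul)

lemma compact_le_loc_iff:
  assumes c: "compact_el c"
  shows "c \<le> loc mul p y \<longleftrightarrow> c \<preceq>\<^bsub>p\<^esub> y"
proof
  assume cy: "c \<le> loc mul p y"
  obtain T where T: "finite T" "c \<le> Sup T"
      "T \<subseteq> {a. compact_el a \<and> (\<exists>s. compact_el s \<and> \<not> s \<le> p \<and> a \<cdot> s \<le> y)}"
    using c[unfolded compact_el_def, rule_format, OF cy[unfolded loc_def]] by blast
  then have "Sup T \<preceq>\<^bsub>p\<^esub> y"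
    using T(1,3) by (intro loc_le_Sup_finite) (auto simp: loc_le_def mul.commute)
  then show "c \<preceq>\<^bsub>p\<^esub> y" by (rule loc_le_trans[OF loc_le_of_le[OF T(2)]])
next
  assume "c \<preceq>\<^bsub>p\<^esub> y"
  then show "c \<le> loc mul p y"
    using c unfolding loc_def loc_le_def by (auto intro!: Sup_upper simp: mul.commute)
qed

lemma le_loc: "x \<le> loc mul p x"
proof -
  have "Sup {c. compact_el c \<and> c \<le> x} \<le> loc mul p x"
    using compact_le_loc_iff loc_le_of_le by (blast intro: Sup_least)
  then show ?thesis by (simp only: Sup_compact_below)
qed

lemma loc_idem: "loc mul p (loc mul p y) = loc mul p y"
proof (rule order.antisym)
  show "loc mul p (loc mul p y) \<le> loc mul p y"
    unfolding loc_def[of _ _ "loc mul p y"]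
  proof (rule Sup_least, clarify)
    fix a s assume a: "compact_el a" "compact_el s" "\<not> s \<le> p" "a \<cdot> s \<le> loc mul p y"
    then have "a \<cdot> s \<preceq>\<^bsub>p\<^esub> y" using compact_le_loc_iff compact_mul by blast
    moreover have "a \<preceq>\<^bsub>p\<^esub> a \<cdot> s"
      using a unfolding loc_le_def by (metis mul.commute order_refl)
    ultimately show "a \<le> loc mul p y" using compact_le_loc_iff[OF a(1)] by (blast intro: loc_le_trans)
  qed
qed (rule le_loc)

lemma loc_carrier_loc: "x \<in> loc_carrier mul p \<Longrightarrow> loc mul p x = x"
  unfolding loc_carrier_def using loc_idem by auto

lemma loc_mul_le: "loc mul p x \<cdot> loc mul p y \<le> loc mul p (x \<cdot> y)"
proof -
  let ?A = "\<lambda>z. {a. compact_el a \<and> (\<exists>s. compact_el s \<and> \<not> s \<le> p \<and> a \<cdot> s \<le> z)}"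
  have "a \<cdot> b \<le> loc mul p (x \<cdot> y)" if "a \<in> ?A x" "b \<in> ?A y" for a b
  proof -
    from that have "a \<preceq>\<^bsub>p\<^esub> x" "b \<preceq>\<^bsub>p\<^esub> y" "compact_el (a \<cdot> b)"
      unfolding loc_le_def by (auto simp: mul.commute compact_mul)
    then show ?thesis using compact_le_loc_iff loc_le_mul by blast
  qed
  then show ?thesis
    unfolding loc_def[of _ _ x] loc_def[of _ _ y] Sup_mul_Sup by (auto intro: Sup_least)
qed

end

lemma compact_not_le_loc_le: "compact_el s \<Longrightarrow> \<not> s \<le> p \<Longrightarrow> a \<preceq>\<^bsub>p\<^esub> s \<cdot> a"
  unfolding loc_le_def by blast

lemma top_loc_le_imp_not_le: "top \<preceq>\<^bsub>p\<^esub> q \<Longrightarrow> \<not> q \<le> p"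
  unfolding loc_le_def by (metis mul_top order_trans)

lemma principal_compact:
  assumes x: "principal_el mul x"
  shows "compact_el x"
proof -
  \<comment> \<open>top is the join of bot \<div> x and the c \<div> x for compact c \<le> x; keep finitely many.\<close>
  define C where "C = {c. compact_el c \<and> c \<le> x}"
  define R where "R = (\<lambda>c. c \<div> x) ` C"
  have "top \<le> sup (Sup R) (bot \<div> x)"
  proof -
    have "Sup R \<cdot> x = Sup C"
      unfolding R_def Sup_mul image_image C_def using principal_res_mul[OF x] by simp
    then have "sup (Sup R) (bot \<div> x) = x \<div> x"
      using principal_sup_res[OF x, of "Sup R" bot] Sup_compact_below[of x] C_def by simp
    then show ?thesis by (simp add: res_self)
  qed
  then obtain F where F: "finite F" "F \<subseteq> insert (bot \<div> x) R" "top \<le> Sup F"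
    using compact_top unfolding compact_el_def by (metis Sup_insert sup_commute)
  have el: "compact_el g \<and> g \<le> x" if g: "g \<in> (\<lambda>f. f \<cdot> x) ` F" for g
  proof -
    obtain f where f: "f \<in> F" "g = f \<cdot> x" using g by blast
    show ?thesis
    proof (cases "f = bot \<div> x")
      case True
      then have "g = bot" using f res_mul_le[of bot x] by (simp add: bot_unique)
      then show ?thesis using compact_bot by simp
    next
      case False
      then obtain c where "c \<in> C" "f = c \<div> x" using f F(2) R_def by auto
      then show ?thesis using f principal_res_mul[OF x] C_def by auto
    qed
  qed
  have "x \<le> Sup ((\<lambda>f. f \<cdot> x) ` F)"
    using mul_right_mono[OF F(3), of x] by (simp add: Sup_mul)
  then have "x = Sup ((\<lambda>f. f \<cdot> x) ` F)"
    using el by (intro order.antisym Sup_least) auto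
  then show "compact_el x"
    using compact_Sup_finite[of "(\<lambda>f. f \<cdot> x) ` F"] F(1) el by simp
qed

lemma principal_le_loc_iff:
  "prime_el mul p \<Longrightarrow> principal_el mul q \<Longrightarrow> q \<le> loc mul p y \<longleftrightarrow> q \<preceq>\<^bsub>p\<^esub> y"
  by (simp add: compact_le_loc_iff principal_compact)

end

locale sharp_domain = C_lat + multiplicative_domain +
  assumes sharp: "sharp mul"
    and principally_generated: "\<forall>x::'a. \<exists>S. (\<forall>s\<in>S. principal_el mul s) \<and> x = Sup S"
begin

lemma sharpE:
  assumes "a1 \<cdot> a2 \<le> b"
  obtains b1 b2 where "a1 \<le> b1" "a2 \<le> b2" "b = b1 \<cdot> b2"
  using assms sharp unfolding sharp_def by blast

lemma Sup_principal_below: "Sup {q. principal_el mul q \<and> q \<le> x} = (x::'a)"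
proof (rule order.antisym)
  obtain S where S: "\<forall>s\<in>S. principal_el mul s" "x = Sup S"
    using principally_generated by blast
  then have "S \<subseteq> {q. principal_el mul q \<and> q \<le> x}" by (auto intro: Sup_upper)
  with S(2) show "x \<le> Sup {q. principal_el mul q \<and> q \<le> x}" by (simp add: Sup_subset_mono)
qed (rule Sup_least, blast)

lemma ex_principal_not_le:
  assumes "\<not> (x::'a) \<le> y"
  obtains q where "principal_el mul q" "q \<le> x" "\<not> q \<le> y"
proof -
  have "\<not> Sup {q. principal_el mul q \<and> q \<le> x} \<le> y"
    using assms by (simp add: Sup_principal_below)
  then show ?thesis using that by (auto simp: Sup_le_iff)
qed

lemma compact_eq_Sup_finite_principal:
  assumes c: "compact_el c"
  obtains T where "finite T" "\<forall>t\<in>T. principal_el mul t" "c = Sup T"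
proof -
  obtain T where T: "finite T" "T \<subseteq> {q. principal_el mul q \<and> q \<le> c}" "c \<le> Sup T"
    using c[unfolded compact_el_def, rule_format, of "{q. principal_el mul q \<and> q \<le> c}"]
    by (auto simp: Sup_principal_below)
  moreover have "Sup T \<le> c" using T(2) by (auto intro: Sup_least)
  ultimately show ?thesis using that by (auto intro: order.antisym)
qed

lemma loc_le_bot: "a \<preceq>\<^bsub>p\<^esub> bot \<Longrightarrow> a = bot"
  unfolding loc_le_def by (auto simp: bot_unique mul_eq_bot_iff)

lemma loc_le_cancel:
  assumes "principal_el mul c" "c \<noteq> bot" "a \<cdot> c \<preceq>\<^bsub>p\<^esub> b \<cdot> c"
  shows "a \<preceq>\<^bsub>p\<^esub> b"
proof -
  obtain s where s: "compact_el s" "\<not> s \<le> p" "s \<cdot> a \<cdot> c \<le> b \<cdot> c"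
    using assms(3) unfolding loc_le_def by (auto simp: mul.assoc)
  then have "s \<cdot> a \<le> b" using principal_mul_le_cancel[OF assms(1,2)] by blast
  with s show ?thesis unfolding loc_le_def by blast
qed

lemma sup_eq_top_if_inf_eq_mul:
  assumes x: "principal_el mul x" "x \<noteq> bot" and y: "principal_el mul y" "y \<noteq> bot"
    and inf_eq: "inf x y = x \<cdot> y"
  shows "sup x y = top"
proof -
  \<comment> \<open>Sharpness factors x \<squnion> y^2 \<ge> (x \<squnion> y)^2 as b1 b2 with x \<squnion> y \<le> b_i; dividing by y
    gives b_i \<le> x \<squnion> y, so x \<le> (x \<squnion> y)^2, and dividing by x gives top \<le> x \<squnion> y.\<close>
  have "sup x y \<cdot> sup x y \<le> sup x (y \<cdot> y)"
    using mul_le_left[of x "sup x y"] mul_le_right[of y x]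
    by (simp add: mul_sup sup_mul le_supI1 le_supI2)
  then obtain b1 b2 where b: "sup x y \<le> b1" "sup x y \<le> b2" "sup x (y \<cdot> y) = b1 \<cdot> b2"
    by (rule sharpE)
  have "(x \<div> y) \<cdot> y = x \<cdot> y" using principal_inf[OF y(1), of x] inf_eq by simp
  then have "x \<div> y = x" using principal_mul_cancel[OF y] by blast
  then have res_y: "sup x (y \<cdot> y) \<div> y = sup x y"
    using principal_sup_res[OF y(1), of y x] by (simp add: sup_commute)
  have "b1 \<cdot> y \<le> b1 \<cdot> b2" "b2 \<cdot> y \<le> b1 \<cdot> b2"
    using b(1,2) mul_left_mono[of y b2 b1] mul_left_mono[of y b1 b2] by (auto simp: mul.commute)
  then have "b1 \<le> sup x (y \<cdot> y) \<div> y" "b2 \<le> sup x (y \<cdot> y) \<div> y"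
    by (simp_all only: le_res_iff b(3))
  then have "b1 \<le> sup x y" "b2 \<le> sup x y" by (simp_all only: res_y)
  have "x \<le> sup x (y \<cdot> y)" by simp
  also have "\<dots> = b1 \<cdot> b2" by (rule b(3))
  also have "\<dots> \<le> sup x y \<cdot> sup x y" using \<open>b1 \<le> sup x y\<close> \<open>b2 \<le> sup x y\<close> by (rule mul_mono)
  also have "\<dots> \<le> sup (sup x y \<cdot> x) (y \<cdot> y)"
    using mul_right_mono[of y "sup x y" x] by (simp add: mul_sup sup_mul mul.commute le_supI1 le_supI2)
  finally have "top \<le> sup (sup x y \<cdot> x) (y \<cdot> y) \<div> x" by (simp add: le_res_iff)
  then have "top \<le> sup (sup x y) (y \<cdot> y \<div> x)" by (simp add: principal_sup_res[OF x(1)])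
  moreover have "y \<cdot> y \<div> x \<le> y \<cdot> y"
  proof (rule principal_res_le[OF x])
    have "inf (y \<cdot> y) x \<le> inf (y \<cdot> y) (inf y x)"
      using mul_le_left[of y y] by (simp add: le_infI1)
    also have "\<dots> = inf (y \<cdot> y) (x \<cdot> y)" by (simp add: inf_commute inf_eq)
    also have "\<dots> = y \<cdot> y \<cdot> x"
      using principal_mul_inf[OF y, of y x] inf_eq by (simp add: inf_commute mul_ac)
    finally show "inf (y \<cdot> y) x \<le> y \<cdot> y \<cdot> x" .
  qed
  then have "sup (sup x y) (y \<cdot> y \<div> x) \<le> sup x y"
    using mul_le_left[of y y] by (meson order_trans sup.cobounded2 sup_least order_refl)
  ultimately have "top \<le> sup x y" by (rule order_trans)
  then show ?thesis by (rule top_unique[THEN iffD1])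
qed

lemma principal_comaximal_factors:
  assumes x: "principal_el mul x" "x \<noteq> bot" and y: "principal_el mul y" "y \<noteq> bot"
  obtains x' y' z where "principal_el mul x'" "principal_el mul y'"
    "x = x' \<cdot> z" "y = y' \<cdot> z" "sup x' y' = top"
proof -
  have xy: "principal_el mul (x \<cdot> y)" "x \<cdot> y \<noteq> bot"
    using x y by (simp_all add: principal_mul mul_eq_bot_iff)
  \<comment> \<open>z is a common factor of x and y, and the cofactors x', y' have x' \<sqinter> y' = x' y'.\<close>
  obtain z w where zw: "sup x y \<le> z" "inf x y \<le> w" "x \<cdot> y = z \<cdot> w"
    using sup_mul_inf_le by (rule sharpE)
  have z: "principal_el mul z" "z \<noteq> bot"
    using principal_factor[of z w] zw(3) xy by auto
  define x' y' where "x' = x \<div> z" and "y' = y \<div> z"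
  have xx: "x = x' \<cdot> z" and yy: "y = y' \<cdot> z"
    using principal_res_mul[OF z(1)] zw(1) unfolding x'_def y'_def by auto
  have x': "principal_el mul x'" "x' \<noteq> bot" and y': "principal_el mul y'" "y' \<noteq> bot"
    using principal_factor xx yy x y by auto
  have "w \<cdot> z = (z \<cdot> x' \<cdot> y') \<cdot> z" using zw(3) xx yy by (simp add: mul_ac)
  then have w: "w = z \<cdot> x' \<cdot> y'" using principal_mul_cancel[OF z] by blast
  have "z \<cdot> inf x' y' = inf x y"
    using principal_mul_inf[OF z] xx yy by (simp add: mul.commute)
  also have "\<dots> \<le> z \<cdot> (x' \<cdot> y')" using zw(2) w by (simp add: mul.assoc)
  finally have "inf x' y' \<cdot> z \<le> (x' \<cdot> y') \<cdot> z" by (simp only: mul.commute)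
  then have "inf x' y' \<le> x' \<cdot> y'" using principal_mul_le_cancel[OF z] by blast
  then have "inf x' y' = x' \<cdot> y'"
    using mul_le_left[of x' y'] mul_le_right[of x' y'] by (simp add: order.antisym)
  then have "sup x' y' = top" using x' y' by (rule sup_eq_top_if_inf_eq_mul[rotated 4])
  with x'(1) y'(1) xx yy show ?thesis by (rule that)
qed

lemma principal_loc_le_linear:
  assumes p: "prime_el mul p" and x: "principal_el mul x" and y: "principal_el mul y"
  shows "x \<preceq>\<^bsub>p\<^esub> y \<or> y \<preceq>\<^bsub>p\<^esub> x"
proof (cases "x = bot \<or> y = bot")
  case True
  then show ?thesis using loc_le_of_le[OF p] by auto
next
  case False
  then obtain x' y' z where x': "principal_el mul x'" and y': "principal_el mul y'"
    and xy: "x = x' \<cdot> z" "y = y' \<cdot> z" and comax: "sup x' y' = top"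
    using principal_comaximal_factors x y by metis
  have "\<not> x' \<le> p \<or> \<not> y' \<le> p"
    using comax top_not_le_prime[OF p] by (metis sup_least)
  moreover have "x' \<cdot> y \<le> x" "y' \<cdot> x \<le> y"
    using mul_le_right[of y' x] mul_le_right[of x' y] xy by (simp_all add: mul_ac)
  ultimately show ?thesis
    using principal_compact[OF x'] principal_compact[OF y'] unfolding loc_le_def by blast
qed

lemma principal_sup:
  assumes x: "principal_el mul x" and y: "principal_el mul y"
  shows "principal_el mul (sup x y)"
proof (cases "x = bot \<or> y = bot")
  case True
  then show ?thesis using x y by auto
next
  case False
  \<comment> \<open>Locally x and y are comparable, which makes x y \<le> (x \<squnion> y)(x \<sqinter> y) hold locally.\<close>
  have "x \<cdot> y \<le> sup x y \<cdot> inf x y"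
  proof (rule le_if_loc_le_maximal)
    fix m :: 'a assume "maximal_el m"
    then have m: "prime_el mul m" by (rule maximal_el_imp_prime_el)
    have "x \<cdot> y \<preceq>\<^bsub>m\<^esub> inf x y \<cdot> sup x y" if ab: "a \<preceq>\<^bsub>m\<^esub> b" and xy: "{a, b} = {x, y}" for a b
    proof -
      obtain s where s: "compact_el s" "\<not> s \<le> m" "s \<cdot> a \<le> b"
        using ab unfolding loc_le_def by blast
      then have "s \<cdot> a \<le> inf x y" using mul_le_right[of s a] xy by (auto simp: doubleton_eq_iff)
      then have "s \<cdot> a \<cdot> b \<le> inf x y \<cdot> sup x y"
        using xy by (intro mul_mono) (auto simp: doubleton_eq_iff)
      moreover have "x \<cdot> y = a \<cdot> b" using xy by (auto simp: doubleton_eq_iff mul.commute)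
      ultimately show ?thesis using s unfolding loc_le_def by (auto simp: mul.assoc)
    qed
    then show "x \<cdot> y \<preceq>\<^bsub>m\<^esub> sup x y \<cdot> inf x y"
      using principal_loc_le_linear[OF m x y] by (metis insert_commute mul.commute)
  qed
  then have "sup x y \<cdot> inf x y = x \<cdot> y"
    using sup_mul_inf_le by (simp add: order.antisym)
  moreover have "x \<cdot> y \<noteq> bot" using False by (simp add: mul_eq_bot_iff)
  ultimately show ?thesis using principal_factor principal_mul[OF x y] by blast
qed

lemma principal_Sup_finite: "finite T \<Longrightarrow> \<forall>t\<in>T. principal_el mul t \<Longrightarrow> principal_el mul (Sup T)"
  by (induction T rule: finite_induct) (auto simp: principal_bot principal_sup)

lemma compact_imp_principal: "compact_el c \<Longrightarrow> principal_el mul c"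
  by (metis compact_eq_Sup_finite_principal principal_Sup_finite)

lemma finite_principal_loc_max:
  assumes p: "prime_el mul p"
  shows "finite T \<Longrightarrow> \<forall>t\<in>T. principal_el mul t \<Longrightarrow> Sup T \<noteq> bot
    \<Longrightarrow> \<exists>t\<in>T. t \<noteq> bot \<and> Sup T \<preceq>\<^bsub>p\<^esub> t"
proof (induction T rule: finite_induct)
  case (insert a T)
  have a: "principal_el mul a" using insert.prems by simp
  show ?case
  proof (cases "Sup T = bot")
    case True
    then have a_eq: "Sup (insert a T) = a" by (simp only: Sup_insert sup_bot_right)
    have "a \<noteq> bot" using insert.prems(2) unfolding a_eq .
    with a_eq show ?thesis using loc_le_refl[OF p] by (intro bexI[of _ a]) auto
  next
    case False
    with insert obtain t where t: "t \<in> T" "t \<noteq> bot" "Sup T \<preceq>\<^bsub>p\<^esub> t" by auto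
    have "principal_el mul t" using insert.prems t(1) by blast
    with a consider "a \<preceq>\<^bsub>p\<^esub> t" | "t \<preceq>\<^bsub>p\<^esub> a"
      using principal_loc_le_linear[OF p] by blast
    then show ?thesis
    proof cases
      case 1
      then have "sup a (Sup T) \<preceq>\<^bsub>p\<^esub> t" using t(3) by (rule loc_le_sup[OF p])
      then show ?thesis using t by auto
    next
      case 2
      then have "a \<noteq> bot" using t(2) loc_le_bot by blast
      have "Sup T \<preceq>\<^bsub>p\<^esub> a" using t(3) 2 by (rule loc_le_trans[OF p])
      then have "sup a (Sup T) \<preceq>\<^bsub>p\<^esub> a" by (rule loc_le_sup[OF p loc_le_refl[OF p]])
      then show ?thesis using \<open>a \<noteq> bot\<close> by auto
    qed
  qed
qed simp

lemma loc_le_Sup_principalE: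
  assumes p: "prime_el mul p" and a: "principal_el mul a" "a \<noteq> bot"
    and S: "\<forall>t\<in>S. principal_el mul t" and aS: "a \<preceq>\<^bsub>p\<^esub> Sup S"
  obtains t where "t \<in> S" "t \<noteq> bot" "a \<preceq>\<^bsub>p\<^esub> t"
proof -
  obtain s where s: "compact_el s" "\<not> s \<le> p" "s \<cdot> a \<le> Sup S"
    using aS unfolding loc_le_def by blast
  have "compact_el (s \<cdot> a)" using s(1) principal_compact[OF a(1)] by (rule compact_mul)
  then obtain T where T: "finite T" "T \<subseteq> S" "s \<cdot> a \<le> Sup T"
    using s(3) unfolding compact_el_def by blast
  have "s \<cdot> a \<noteq> bot" using s(2) a(2) by (auto simp: mul_eq_bot_iff)
  then have "Sup T \<noteq> bot" using T(3) by (metis bot_unique)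
  then obtain t where t: "t \<in> T" "t \<noteq> bot" "Sup T \<preceq>\<^bsub>p\<^esub> t"
    using finite_principal_loc_max[OF p T(1)] S T(2) by blast
  have "a \<preceq>\<^bsub>p\<^esub> Sup T"
    using compact_not_le_loc_le[OF s(1,2)] loc_le_of_le[OF p T(3)] by (rule loc_le_trans[OF p])
  then have "a \<preceq>\<^bsub>p\<^esub> t" using t(3) by (rule loc_le_trans[OF p])
  with t T(2) show ?thesis using that by blast
qed

lemma principal_loc_dvdE:
  assumes p: "prime_el mul p" and a: "principal_el mul a"
    and q: "principal_el mul q" "q \<noteq> bot" and aq: "a \<preceq>\<^bsub>p\<^esub> q"
  obtains r where "principal_el mul r" "a \<preceq>\<^bsub>p\<^esub> r \<cdot> q" "r \<cdot> q \<le> a"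
proof (cases "a = bot")
  case True
  then show ?thesis using that[of bot] principal_bot loc_le_refl[OF p] by simp
next
  case False
  obtain s where s: "compact_el s" "\<not> s \<le> p" "s \<cdot> a \<le> q"
    using aq unfolding loc_le_def by blast
  define R where "R = {r. principal_el mul r \<and> r \<le> s \<cdot> a \<div> q}"
  have "s \<cdot> a = (s \<cdot> a \<div> q) \<cdot> q" using principal_res_mul[OF q(1) s(3)] by simp
  also have "\<dots> = Sup ((\<lambda>r. r \<cdot> q) ` R)" unfolding R_def Sup_principal_below Sup_mul[symmetric] ..
  finally have "a \<preceq>\<^bsub>p\<^esub> Sup ((\<lambda>r. r \<cdot> q) ` R)"
    using compact_not_le_loc_le[OF s(1,2), of a] by simp
  moreover have "\<forall>t\<in>(\<lambda>r. r \<cdot> q) ` R. principal_el mul t"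
    using q(1) by (auto simp: R_def principal_mul)
  ultimately obtain r where r: "r \<in> R" "a \<preceq>\<^bsub>p\<^esub> r \<cdot> q"
    using loc_le_Sup_principalE[OF p a False] by blast
  have "r \<cdot> q \<le> (s \<cdot> a \<div> q) \<cdot> q" using r(1) by (auto simp: R_def intro: mul_right_mono)
  also have "\<dots> \<le> a" using \<open>s \<cdot> a = (s \<cdot> a \<div> q) \<cdot> q\<close> mul_le_right[of s a] by simp
  finally show ?thesis using r that R_def by blast
qed

lemma factor_of_loc_principal:
  assumes p: "prime_el mul p" and g: "principal_el mul g" "g \<noteq> bot"
    and gb: "loc mul p g = b1 \<cdot> b2"
  obtains \<beta> where "principal_el mul \<beta>" "\<beta> \<le> b1" "b1 \<le> loc mul p \<beta>"
proof -
  define P1 P2 where "P1 = {q. principal_el mul q \<and> q \<le> b1}" and "P2 = {q. principal_el mul q \<and> q \<le> b2}"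
  have "g \<le> b1 \<cdot> b2" using le_loc[OF p, of g] gb by simp
  also have "\<dots> = Sup {a \<cdot> b |a b. a \<in> P1 \<and> b \<in> P2}"
    unfolding P1_def P2_def Sup_mul_Sup[symmetric] Sup_principal_below ..
  finally have "g \<preceq>\<^bsub>p\<^esub> Sup {a \<cdot> b |a b. a \<in> P1 \<and> b \<in> P2}" by (rule loc_le_of_le[OF p])
  moreover have "\<forall>t\<in>{a \<cdot> b |a b. a \<in> P1 \<and> b \<in> P2}. principal_el mul t"
    by (auto simp: P1_def P2_def principal_mul)
  ultimately obtain p1 p2 where p12: "p1 \<in> P1" "p2 \<in> P2" "p1 \<cdot> p2 \<noteq> bot" "g \<preceq>\<^bsub>p\<^esub> p1 \<cdot> p2"
    using loc_le_Sup_principalE[OF p g] by blast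
  have p2: "principal_el mul p2" "p2 \<noteq> bot" using p12 by (auto simp: P2_def)
  have "q \<le> loc mul p p1" if q: "q \<in> P1" for q
  proof -
    have "q \<cdot> p2 \<le> loc mul p g" using q p12(2) gb by (auto simp: P1_def P2_def intro: mul_mono)
    then have "q \<cdot> p2 \<preceq>\<^bsub>p\<^esub> g"
      using principal_le_loc_iff[OF p] principal_mul q p2 by (simp add: P1_def)
    then have "q \<cdot> p2 \<preceq>\<^bsub>p\<^esub> p1 \<cdot> p2" using p12(4) by (rule loc_le_trans[OF p])
    then have "q \<preceq>\<^bsub>p\<^esub> p1" by (rule loc_le_cancel[OF p2])
    then show ?thesis using principal_le_loc_iff[OF p] q by (simp add: P1_def)
  qed
  then have "b1 \<le> loc mul p p1"
    using Sup_principal_below[of b1] by (metis (no_types, lifting) P1_def Sup_least)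
  then show ?thesis using that p12(1) by (auto simp: P1_def)
qed

lemma sharp_loc_factorization:
  assumes p: "prime_el mul p" and g: "principal_el mul g" "g \<noteq> bot"
    and a: "a1 \<cdot> a2 \<le> loc mul p g"
  obtains \<beta>1 \<beta>2 where "principal_el mul \<beta>1" "principal_el mul \<beta>2"
    "a1 \<le> loc mul p \<beta>1" "a2 \<le> loc mul p \<beta>2"
    "\<beta>1 \<cdot> \<beta>2 \<preceq>\<^bsub>p\<^esub> g" "g \<preceq>\<^bsub>p\<^esub> \<beta>1 \<cdot> \<beta>2"
proof -
  obtain b1 b2 where b: "a1 \<le> b1" "a2 \<le> b2" "loc mul p g = b1 \<cdot> b2"
    using a by (rule sharpE)
  obtain \<beta>1 where \<beta>1: "principal_el mul \<beta>1" "\<beta>1 \<le> b1" "b1 \<le> loc mul p \<beta>1"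
    using factor_of_loc_principal[OF p g b(3)] by blast
  obtain \<beta>2 where \<beta>2: "principal_el mul \<beta>2" "\<beta>2 \<le> b2" "b2 \<le> loc mul p \<beta>2"
    using factor_of_loc_principal[OF p g, of b2 b1] b(3) by (metis mul.commute)
  have "\<beta>1 \<cdot> \<beta>2 \<le> loc mul p g" using mul_mono[OF \<beta>1(2) \<beta>2(2)] b(3) by simp
  then have "\<beta>1 \<cdot> \<beta>2 \<preceq>\<^bsub>p\<^esub> g"
    using principal_le_loc_iff[OF p principal_mul[OF \<beta>1(1) \<beta>2(1)]] by blast
  moreover have "g \<le> loc mul p (\<beta>1 \<cdot> \<beta>2)"
  proof -
    have "g \<le> b1 \<cdot> b2" using le_loc[OF p, of g] b(3) by simp
    also have "\<dots> \<le> loc mul p \<beta>1 \<cdot> loc mul p \<beta>2" using \<beta>1(3) \<beta>2(3) by (rule mul_mono)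
    also have "\<dots> \<le> loc mul p (\<beta>1 \<cdot> \<beta>2)" by (rule loc_mul_le[OF p])
    finally show ?thesis .
  qed
  then have "g \<preceq>\<^bsub>p\<^esub> \<beta>1 \<cdot> \<beta>2" using principal_le_loc_iff[OF p g(1)] by blast
  moreover have "a1 \<le> loc mul p \<beta>1" "a2 \<le> loc mul p \<beta>2"
    using order_trans[OF b(1) \<beta>1(3)] order_trans[OF b(2) \<beta>2(3)] .
  ultimately show ?thesis using that \<beta>1(1) \<beta>2(1) by blast
qed

lemma not_le_if_loc_le_mul:
  assumes "principal_el mul c" "c \<noteq> bot" "c \<preceq>\<^bsub>p\<^esub> q \<cdot> c"
  shows "\<not> q \<le> p"
proof -
  have "top \<cdot> c \<preceq>\<^bsub>p\<^esub> q \<cdot> c" using assms(3) by simp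
  then have "top \<preceq>\<^bsub>p\<^esub> q" by (rule loc_le_cancel[OF assms(1,2)])
  then show ?thesis by (rule top_loc_le_imp_not_le)
qed

lemma loc_below_all_mpow_not_max:
  assumes p: "prime_el mul p" and q: "principal_el mul q" "q \<noteq> bot" "q \<le> p"
    and \<beta>: "principal_el mul \<beta>" "\<beta> \<noteq> bot" and all: "\<forall>n. \<beta> \<preceq>\<^bsub>p\<^esub> mpow q n"
  obtains r where "principal_el mul r" "\<forall>n. r \<preceq>\<^bsub>p\<^esub> mpow q n" "\<not> r \<preceq>\<^bsub>p\<^esub> \<beta>"
proof -
  have "\<beta> \<preceq>\<^bsub>p\<^esub> q" using all[rule_format, of 1] by simp
  then obtain r where r: "principal_el mul r" "\<beta> \<preceq>\<^bsub>p\<^esub> r \<cdot> q" "r \<cdot> q \<le> \<beta>"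
    using principal_loc_dvdE[OF p \<beta>(1) q(1,2)] by blast
  have "r \<cdot> q \<preceq>\<^bsub>p\<^esub> mpow q n \<cdot> q" for n
    using loc_le_trans[OF p loc_le_of_le[OF p r(3)] all[rule_format, of "Suc n"]]
    by (simp add: mul.commute)
  then have "\<forall>n. r \<preceq>\<^bsub>p\<^esub> mpow q n" using loc_le_cancel[OF q(1,2)] by blast
  moreover have "\<not> r \<preceq>\<^bsub>p\<^esub> \<beta>"
  proof
    assume "r \<preceq>\<^bsub>p\<^esub> \<beta>"
    then have "r \<preceq>\<^bsub>p\<^esub> q \<cdot> r" using r(2) by (simp add: mul.commute loc_le_trans[OF p])
    moreover have "r \<noteq> bot" using r(2) \<beta>(2) loc_le_bot by force
    ultimately show False using not_le_if_loc_le_mul r(1) q(3) by blast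
  qed
  ultimately show ?thesis using that r(1) by blast
qed

lemma mpow_quotient_not_loc_le:
  assumes p: "prime_el mul p" and q: "principal_el mul q" "q \<noteq> bot" "q \<le> p"
    and g: "principal_el mul g" "g \<noteq> bot" and gq: "g \<preceq>\<^bsub>p\<^esub> mpow q (Suc n)"
  obtains x where "principal_el mul x" "x \<cdot> mpow q (Suc n) \<le> g" "\<not> mpow q n \<cdot> x \<preceq>\<^bsub>p\<^esub> g"
proof -
  obtain x where x: "principal_el mul x" "g \<preceq>\<^bsub>p\<^esub> x \<cdot> mpow q (Suc n)" "x \<cdot> mpow q (Suc n) \<le> g"
    using principal_loc_dvdE[OF p g(1) principal_mpow[OF q(1)] mpow_neq_bot[OF q(2)] gq] by blast
  have "\<not> mpow q n \<cdot> x \<preceq>\<^bsub>p\<^esub> g"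
  proof
    assume "mpow q n \<cdot> x \<preceq>\<^bsub>p\<^esub> g"
    then have "mpow q n \<cdot> x \<preceq>\<^bsub>p\<^esub> q \<cdot> (mpow q n \<cdot> x)"
      using loc_le_trans[OF p _ x(2)] by (simp add: mul_ac)
    moreover have "principal_el mul (mpow q n \<cdot> x)"
      using principal_mul principal_mpow q(1) x(1) by blast
    moreover have "mpow q n \<cdot> x \<noteq> bot"
      using x(2) g(2) loc_le_bot mpow_neq_bot[OF q(2)] by (force simp: mul_eq_bot_iff)
    ultimately show False using not_le_if_loc_le_mul q(3) by blast
  qed
  with x show ?thesis using that by blast
qed

lemma principal_loc_archimedean:
  assumes p: "prime_el mul p" and q: "principal_el mul q" "q \<noteq> bot" "q \<le> p"
    and g: "principal_el mul g" "g \<noteq> bot"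
  obtains n where "\<not> g \<preceq>\<^bsub>p\<^esub> mpow q n"
proof (rule ccontr)
  assume "\<not> thesis"
  with that have g_le: "g \<preceq>\<^bsub>p\<^esub> mpow q n" for n by blast
  \<comment> \<open>Sharpness splits Sup A \<cdot> Sup C \<le> g_p into locally principal factors \<beta>1 \<beta>2 \<sim> g,
    where \<beta>1 bounds A locally.  If \<beta>1 \<in> A, some element of A is not below it; otherwise
    q^n \<preceq> \<beta>1 for some n and the quotient g / q^(n+1) \<in> C is too large to lie below \<beta>2.\<close>
  define A where "A = {r. principal_el mul r \<and> (\<forall>n. r \<preceq>\<^bsub>p\<^esub> mpow q n)}"
  define C where "C = {x. principal_el mul x \<and> (\<exists>n. x \<cdot> mpow q n \<preceq>\<^bsub>p\<^esub> g)}"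
  have "r \<cdot> x \<le> loc mul p g" if r: "r \<in> A" and x: "x \<in> C" for r x
  proof -
    obtain n where n: "x \<cdot> mpow q n \<preceq>\<^bsub>p\<^esub> g" using x C_def by blast
    have "r \<cdot> x \<preceq>\<^bsub>p\<^esub> mpow q n \<cdot> x" using r A_def loc_le_mul[OF p _ loc_le_refl[OF p]] by blast
    then have "r \<cdot> x \<preceq>\<^bsub>p\<^esub> g" using n by (simp add: mul.commute loc_le_trans[OF p])
    then show ?thesis using principal_le_loc_iff[OF p] principal_mul r x A_def C_def by blast
  qed
  then have "Sup A \<cdot> Sup C \<le> loc mul p g" unfolding Sup_mul_Sup by (blast intro: Sup_least)
  then obtain \<beta>1 \<beta>2 where \<beta>: "principal_el mul \<beta>1" "principal_el mul \<beta>2"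
    "Sup A \<le> loc mul p \<beta>1" "Sup C \<le> loc mul p \<beta>2"
    "\<beta>1 \<cdot> \<beta>2 \<preceq>\<^bsub>p\<^esub> g" "g \<preceq>\<^bsub>p\<^esub> \<beta>1 \<cdot> \<beta>2"
    using sharp_loc_factorization[OF p g] by blast
  have "\<beta>1 \<noteq> bot" using \<beta>(6) g(2) loc_le_bot by force
  show False
  proof (cases "\<forall>n. \<beta>1 \<preceq>\<^bsub>p\<^esub> mpow q n")
    case True
    then obtain r where r: "principal_el mul r" "\<forall>n. r \<preceq>\<^bsub>p\<^esub> mpow q n" "\<not> r \<preceq>\<^bsub>p\<^esub> \<beta>1"
      using loc_below_all_mpow_not_max[OF p q \<beta>(1) \<open>\<beta>1 \<noteq> bot\<close>] by blast
    then have "r \<in> A" unfolding A_def by blast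
    then have "r \<le> loc mul p \<beta>1" by (rule order_trans[OF Sup_upper \<beta>(3)])
    then show False using principal_le_loc_iff[OF p r(1)] r(3) by blast
  next
    case False
    then obtain n where "\<not> \<beta>1 \<preceq>\<^bsub>p\<^esub> mpow q n" by blast
    then have qn: "mpow q n \<preceq>\<^bsub>p\<^esub> \<beta>1"
      using principal_loc_le_linear[OF p \<beta>(1) principal_mpow[OF q(1)]] by blast
    obtain x where x: "principal_el mul x" "x \<cdot> mpow q (Suc n) \<le> g" "\<not> mpow q n \<cdot> x \<preceq>\<^bsub>p\<^esub> g"
      using mpow_quotient_not_loc_le[OF p q g g_le] by blast
    then have "x \<in> C" using loc_le_of_le[OF p x(2)] unfolding C_def by blast
    then have "x \<le> loc mul p \<beta>2" by (rule order_trans[OF Sup_upper \<beta>(4)])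
    then have "x \<preceq>\<^bsub>p\<^esub> \<beta>2" using principal_le_loc_iff[OF p x(1)] by blast
    then have "mpow q n \<cdot> x \<preceq>\<^bsub>p\<^esub> \<beta>1 \<cdot> \<beta>2" using qn by (simp add: loc_le_mul[OF p])
    then show False using loc_le_trans[OF p _ \<beta>(5)] x(3) by blast
  qed
qed

lemma prime_el_nonzero_imp_maximal:
  assumes p: "prime_el mul p" "p \<noteq> bot"
  shows "maximal_el p"
proof -
  obtain m where m: "maximal_el m" "p \<le> m"
    using ex_maximal_above p(1) unfolding prime_el_def by blast
  have m_prime: "prime_el mul m" using m(1) by (rule maximal_el_imp_prime_el)
  show ?thesis
  proof (cases "m \<le> p")
    case True
    with m show ?thesis by (simp add: order.antisym)
  next
    case False
    then obtain q where q: "principal_el mul q" "q \<le> m" "\<not> q \<le> p"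
      by (rule ex_principal_not_le)
    have "\<not> p \<le> bot" using p(2) by (simp add: bot_unique)
    then obtain g where g: "principal_el mul g" "g \<le> p" "\<not> g \<le> bot"
      by (rule ex_principal_not_le)
    have "q \<noteq> bot" "g \<noteq> bot" using q(3) g(3) by auto
    then obtain n where "\<not> g \<preceq>\<^bsub>m\<^esub> mpow q n"
      using principal_loc_archimedean[OF m_prime q(1) _ q(2) g(1)] by blast
    then have "mpow q n \<preceq>\<^bsub>m\<^esub> g"
      using principal_loc_le_linear[OF m_prime g(1) principal_mpow[OF q(1)]] by blast
    then obtain s where s: "\<not> s \<le> m" "s \<cdot> mpow q n \<le> g"
      unfolding loc_le_def by blast
    have "\<not> s \<le> p" using s(1) m(2) order_trans by blast
    moreover have "s \<cdot> mpow q n \<le> p" using s(2) g(2) by (rule order_trans)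
    ultimately have "mpow q n \<le> p" using p(1) unfolding prime_el_def by blast
    then show ?thesis using q(3) prime_el_mpow_le[OF p(1)] by blast
  qed
qed

lemma Pruefer_1dim: "Pruefer_1dim mul"
  unfolding Pruefer_1dim_def using compact_imp_principal prime_el_nonzero_imp_maximal by blast

end

definition upsets :: "'b::order set \<Rightarrow> 'b set set" where
  "upsets W = {U. U \<subseteq> W \<and> (\<forall>u\<in>U. \<forall>w\<in>W. u \<le> w \<longrightarrow> w \<in> U)}"

lemma mlat_isomorphicI:
  fixes f :: "'a::order \<Rightarrow> 'b::order"
  assumes "f ` A = B"
    and "\<And>x y. x \<in> A \<Longrightarrow> y \<in> A \<Longrightarrow> f x \<le> f y \<longleftrightarrow> x \<le> y"
    and "\<And>x y. x \<in> A \<Longrightarrow> y \<in> A \<Longrightarrow> f (mA x y) = mB (f x) (f y)"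
  shows "mlat_isomorphic A (\<le>) mA B (\<le>) mB"
proof -
  have "inj_on f A" by (rule inj_onI) (metis assms(2) order.antisym order.refl)
  then show ?thesis using assms unfolding mlat_isomorphic_def mlat_iso_def bij_betw_def by blast
qed

lemma upsets_nonneg_reals:
  "upsets {0::real..} = insert {} ((\<lambda>r. {r<..}) ` {0..} \<union> (\<lambda>r. {r..}) ` {0..})"
proof (intro set_eqI iffI)
  fix U assume "U \<in> upsets {0::real..}"
  then have U: "U \<subseteq> {0..}" and up0: "\<And>u w. u \<in> U \<Longrightarrow> 0 \<le> w \<Longrightarrow> u \<le> w \<Longrightarrow> w \<in> U"
    unfolding upsets_def by auto
  have up: "w \<in> U" if "u \<in> U" "u \<le> w" for u w
  proof -
    have "0 \<le> u" using U that(1) by auto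
    then show ?thesis using up0[OF that(1) _ that(2)] that(2) by simp
  qed
  show "U \<in> insert {} ((\<lambda>r. {r<..}) ` {0..} \<union> (\<lambda>r. {r..}) ` {0..})"
  proof (cases "U = {}")
    case False
    have bdd: "bdd_below U" using U by (auto intro: bdd_belowI)
    have r0: "0 \<le> Inf U" using False U by (intro cInf_greatest) auto
    have "U = (if Inf U \<in> U then {Inf U..} else {Inf U<..})"
      using up cInf_lower[OF _ bdd] cInf_less_iff[OF False bdd] by (auto simp: less_le)
    with r0 show ?thesis by (auto split: if_splits)
  qed simp
qed (auto simp: upsets_def)

lemma ereal_image_greaterThan: "insert \<infinity> (ereal ` {r<..}) = {x. ereal r < x}"
proof (intro set_eqI)
  fix x :: ereal
  show "x \<in> insert \<infinity> (ereal ` {r<..}) \<longleftrightarrow> x \<in> {x. ereal r < x}" by (cases x) auto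
qed

lemma ereal_image_atLeast: "insert \<infinity> (ereal ` {r..}) = {x. ereal r \<le> x}"
proof (intro set_eqI)
  fix x :: ereal
  show "x \<in> insert \<infinity> (ereal ` {r..}) \<longleftrightarrow> x \<in> {x. ereal r \<le> x}" by (cases x) auto
qed

lemma insert_infinity_ereal_image_subset_iff:
  "insert \<infinity> (ereal ` U) \<subseteq> insert \<infinity> (ereal ` W) \<longleftrightarrow> U \<subseteq> W"
  by auto

lemma set_add_insert_infinity_ereal_image:
  "set_add (insert \<infinity> (ereal ` U)) (insert \<infinity> (ereal ` W)) = insert \<infinity> (ereal ` (U + W))"
proof (intro set_eqI iffI)
  fix z assume "z \<in> set_add (insert \<infinity> (ereal ` U)) (insert \<infinity> (ereal ` W))"
  then obtain x y where "z = x + y" "x \<in> insert \<infinity> (ereal ` U)" "y \<in> insert \<infinity> (ereal ` W)"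
    unfolding set_add_def by blast
  then show "z \<in> insert \<infinity> (ereal ` (U + W))" by (fastforce simp: set_plus_def image_iff)
next
  fix z assume "z \<in> insert \<infinity> (ereal ` (U + W))"
  then consider "z = \<infinity> + \<infinity>" | u w where "u \<in> U" "w \<in> W" "z = ereal u + ereal w"
    by (auto simp: set_plus_def)
  then show "z \<in> set_add (insert \<infinity> (ereal ` U)) (insert \<infinity> (ereal ` W))"
    unfolding set_add_def by cases blast+
qed

lemma mlat_isomorphic_R1:
  fixes V :: "'a::order \<Rightarrow> real set"
  assumes image: "V ` A = upsets {0..}"
    and order: "\<And>x y. x \<in> A \<Longrightarrow> y \<in> A \<Longrightarrow> V x \<subseteq> V y \<longleftrightarrow> x \<le> y"
    and mult: "\<And>x y. x \<in> A \<Longrightarrow> y \<in> A \<Longrightarrow> V (mA x y) = V x + V y"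
  shows "mlat_isomorphic A (\<le>) mA R1 (\<subseteq>) set_add"
proof (rule mlat_isomorphicI[where f = "\<lambda>x. insert \<infinity> (ereal ` V x)"])
  have "(\<lambda>x. insert \<infinity> (ereal ` V x)) ` A = (\<lambda>U. insert \<infinity> (ereal ` U)) ` upsets {0..}"
    by (simp flip: image add: image_image)
  also have "\<dots> = insert {\<infinity>} ((\<lambda>r. {x. ereal r < x}) ` {0..} \<union> (\<lambda>r. {x. ereal r \<le> x}) ` {0..})"
    by (simp add: upsets_nonneg_reals image_Un image_image ereal_image_greaterThan ereal_image_atLeast)
  also have "\<dots> = R1" unfolding R1_def by auto
  finally show "(\<lambda>x. insert \<infinity> (ereal ` V x)) ` A = R1" .
  show "insert \<infinity> (ereal ` V x) \<subseteq> insert \<infinity> (ereal ` V y) \<longleftrightarrow> x \<le> y" if "x \<in> A" "y \<in> A" for x y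
    unfolding insert_infinity_ereal_image_subset_iff by (rule order[OF that])
  show "insert \<infinity> (ereal ` V (mA x y)) = set_add (insert \<infinity> (ereal ` V x)) (insert \<infinity> (ereal ` V y))"
    if "x \<in> A" "y \<in> A" for x y
    unfolding mult[OF that] by (rule set_add_insert_infinity_ereal_image[symmetric])
qed

lemma upsets_Nats: "upsets (\<nat>::real set) = insert {} (range (\<lambda>k. of_nat ` {k..}))"
proof (intro set_eqI iffI)
  fix U assume "U \<in> upsets (\<nat>::real set)"
  then have U: "U \<subseteq> \<nat>" and up: "\<And>u w. u \<in> U \<Longrightarrow> w \<in> \<nat> \<Longrightarrow> u \<le> w \<Longrightarrow> w \<in> U"
    unfolding upsets_def by auto
  show "U \<in> insert {} (range (\<lambda>k. of_nat ` {k..}))"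
  proof (cases "U = {}")
    case False
    then obtain n :: nat where n: "of_nat n \<in> U" using U by (auto elim!: Nats_cases)
    define k where "k = (LEAST n. (of_nat n :: real) \<in> U)"
    have k: "of_nat k \<in> U" using n unfolding k_def by (rule LeastI)
    have "U = of_nat ` {k..}"
    proof
      show "U \<subseteq> of_nat ` {k..}"
      proof
        fix u assume "u \<in> U"
        then obtain m where "u = of_nat m" "of_nat m \<in> U" using U by (auto elim!: Nats_cases)
        then show "u \<in> of_nat ` {k..}" unfolding k_def by (auto intro: Least_le)
      qed
      show "of_nat ` {k..} \<subseteq> U" using up[OF k] by auto
    qed
    then show ?thesis by blast
  qed simp
qed (auto simp: upsets_def elim!: Nats_cases)

lemma range_ereal_nonpos_ints:
  "{ereal (of_int n) | n::int. n \<le> 0} = range (\<lambda>k. ereal (- real k))"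
proof (intro set_eqI iffI)
  fix z assume "z \<in> {ereal (of_int n) | n::int. n \<le> 0}"
  then obtain n :: int where "n \<le> 0" "z = ereal (of_int n)" by blast
  then have "z = ereal (- real (nat (- n)))" by simp
  then show "z \<in> range (\<lambda>k. ereal (- real k))" by blast
next
  fix z assume "z \<in> range (\<lambda>k. ereal (- real k))"
  then obtain k where "z = ereal (of_int (- int k))" by auto
  moreover have "- int k \<le> 0" by simp
  ultimately show "z \<in> {ereal (of_int n) | n::int. n \<le> 0}" by blast
qed

lemma of_nat_atLeast_subset_iff: "(of_nat ` {k..} :: real set) \<subseteq> of_nat ` {l..} \<longleftrightarrow> l \<le> k"
proof
  assume "of_nat ` {k..} \<subseteq> (of_nat ` {l..} :: real set)"
  then have "(of_nat k :: real) \<in> of_nat ` {l..}" by blast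
  then show "l \<le> k" by auto
qed auto

lemma of_nat_atLeast_plus: "of_nat ` {k..} + of_nat ` {l..} = (of_nat ` {k + l..} :: real set)"
proof (intro set_eqI iffI)
  fix z :: real assume "z \<in> of_nat ` {k + l..}"
  then obtain n where "k + l \<le> n" "z = of_nat n" by auto
  then have "z = of_nat k + of_nat (n - k)" "k \<in> {k..}" "n - k \<in> {l..}" by auto
  then show "z \<in> of_nat ` {k..} + of_nat ` {l..}" unfolding set_plus_def by blast
qed (auto simp: set_plus_def simp flip: of_nat_add)

lemma mlat_isomorphic_Zminus:
  fixes V :: "'a::order \<Rightarrow> real set"
  assumes image: "V ` A = upsets \<nat>"
    and order: "\<And>x y. x \<in> A \<Longrightarrow> y \<in> A \<Longrightarrow> V x \<subseteq> V y \<longleftrightarrow> x \<le> y"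
    and mult: "\<And>x y. x \<in> A \<Longrightarrow> y \<in> A \<Longrightarrow> V (mA x y) = V x + V y"
  shows "mlat_isomorphic A (\<le>) mA Zminus (\<le>) (+)"
proof -
  define g :: "real set \<Rightarrow> ereal" where "g U = (if U = {} then -\<infinity> else ereal (- Inf U))" for U
  have g_atLeast: "g (of_nat ` {k..}) = ereal (- real k)" for k
  proof -
    have "Inf (of_nat ` {k..} :: real set) = of_nat k" by (rule cInf_eq_minimum) auto
    then show ?thesis unfolding g_def by simp
  qed
  have g_le_iff: "g U \<le> g W \<longleftrightarrow> U \<subseteq> W" if "U \<in> upsets \<nat>" "W \<in> upsets \<nat>" for U W
    using that unfolding upsets_Nats by (auto simp: g_atLeast g_def[of "{}"] of_nat_atLeast_subset_iff)
  have g_plus: "g (U + W) = g U + g W" if "U \<in> upsets \<nat>" "W \<in> upsets \<nat>" for U W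
    using that unfolding upsets_Nats by (auto simp: g_atLeast g_def[of "{}"] of_nat_atLeast_plus)
  have V_upsets: "V x \<in> upsets \<nat>" if "x \<in> A" for x
    using image that by (metis imageI)
  show ?thesis
  proof (rule mlat_isomorphicI[where f = "g \<circ> V"])
    have "(g \<circ> V) ` A = g ` upsets \<nat>" by (simp flip: image add: image_image)
    also have "\<dots> = insert (-\<infinity>) (range (\<lambda>k. ereal (- real k)))"
      unfolding upsets_Nats by (simp add: image_image g_atLeast g_def[of "{}"])
    also have "\<dots> = Zminus"
      unfolding Zminus_def range_ereal_nonpos_ints by auto
    finally show "(g \<circ> V) ` A = Zminus" .
  qed (simp_all add: g_le_iff g_plus V_upsets order mult)
qed

locale valuation = sharp_domain +
  fixes p t :: 'a
  assumes prime: "prime_el mul p"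
    and generator: "principal_el mul t" "t \<noteq> bot" "t \<le> p"
begin

abbreviation loc_le_at (infix "\<preceq>" 50) where "a \<preceq> b \<equiv> a \<preceq>\<^bsub>p\<^esub> b"

abbreviation nonzero_principal :: "'a \<Rightarrow> bool" where
  "nonzero_principal q \<equiv> principal_el mul q \<and> q \<noteq> bot"

lemma nonzero_principal_mul: "nonzero_principal a \<Longrightarrow> nonzero_principal b \<Longrightarrow> nonzero_principal (a \<cdot> b)"
  by (simp add: principal_mul mul_eq_bot_iff)

lemma nonzero_principal_mpow: "nonzero_principal a \<Longrightarrow> nonzero_principal (mpow a n)"
  by (simp add: principal_mpow mpow_neq_bot)

lemma mpow_generator_loc_le_iff: "mpow t i \<preceq> mpow t j \<longleftrightarrow> j \<le> i"
proof
  assume le: "mpow t i \<preceq> mpow t j"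
  show "j \<le> i"
  proof (rule ccontr)
    assume "\<not> j \<le> i"
    then obtain k where k: "j - i = Suc k" using not0_implies_Suc by fastforce
    then have "mpow t (j - i) \<le> p" using order_trans[OF mul_le_left generator(3)] by simp
    moreover have "mpow t j = mpow t (j - i) \<cdot> mpow t i"
      using mpow_add[of t "j - i" i] \<open>\<not> j \<le> i\<close> by simp
    ultimately show False
      using not_le_if_loc_le_mul[of "mpow t i" p] le generator principal_mpow mpow_neq_bot by auto
  qed
next
  assume "j \<le> i"
  then have "mpow t i \<le> mpow t j"
    using mpow_add[of t j "i - j"] mul_le_left by (metis le_add_diff_inverse)
  then show "mpow t i \<preceq> mpow t j" by (rule loc_le_of_le[OF prime])
qed

(* mpow q b \<preceq> mpow t a says that t^a divides q^b locally, so val is the valuation at p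
   normalised by val t = 1; it is meaningful only for nonzero principal q. *)
definition val_ratios :: "'a \<Rightarrow> real set" where
  "val_ratios q = {real a / real b | a b. 0 < b \<and> mpow q b \<preceq> mpow t a}"

definition val :: "'a \<Rightarrow> real" where
  "val q = Sup (val_ratios q)"

lemma zero_in_val_ratios: "0 \<in> val_ratios q"
proof -
  have "mpow q 1 \<preceq> mpow t 0" by (simp add: loc_le_of_le[OF prime])
  then show ?thesis unfolding val_ratios_def by force
qed

lemma val_ratios_bdd_above:
  assumes "nonzero_principal q"
  shows "bdd_above (val_ratios q)"
proof -
  have q: "principal_el mul q" "q \<noteq> bot" using assms by auto
  obtain N where "\<not> q \<preceq> mpow t N"
    using principal_loc_archimedean[OF prime generator q] by blast
  then have N: "mpow t N \<preceq> q"
    using principal_loc_le_linear[OF prime principal_mpow[OF generator(1)] q(1)] by blast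
  have "real a / real b \<le> N" if "0 < b" "mpow q b \<preceq> mpow t a" for a b
  proof -
    have "mpow t (N * b) \<preceq> mpow q b" using loc_le_mpow[OF prime N, of b] by (simp add: mpow_mult)
    then have "mpow t (N * b) \<preceq> mpow t a" using that(2) by (rule loc_le_trans[OF prime])
    then have "real a \<le> real N * real b" by (simp add: mpow_generator_loc_le_iff flip: of_nat_mult)
    with that(1) show ?thesis by (simp add: divide_le_eq)
  qed
  then show ?thesis unfolding bdd_above_def val_ratios_def by blast
qed

lemma val_ge:
  "nonzero_principal q \<Longrightarrow> 0 < b \<Longrightarrow> mpow q b \<preceq> mpow t a \<Longrightarrow> real a / real b \<le> val q"
  unfolding val_def by (rule cSup_upper) (auto simp: val_ratios_bdd_above, auto simp: val_ratios_def)

lemma val_le: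
  assumes "\<And>a b. 0 < b \<Longrightarrow> mpow q b \<preceq> mpow t a \<Longrightarrow> real a / real b \<le> c"
  shows "val q \<le> c"
  unfolding val_def
proof (rule cSup_least)
  show "val_ratios q \<noteq> {}" using zero_in_val_ratios by blast
qed (use assms in \<open>auto simp: val_ratios_def\<close>)

lemma val_nonneg: "nonzero_principal q \<Longrightarrow> 0 \<le> val q"
  using val_ge[of q 1 0] by (simp add: loc_le_of_le[OF prime])

lemma val_gt:
  assumes q: "nonzero_principal q" and b: "0 < b" and lt: "val q < real a / real b"
  shows "mpow t a \<preceq> mpow q b"
proof -
  have "\<not> mpow q b \<preceq> mpow t a" using val_ge[OF q b] lt by fastforce
  then show ?thesis
    using principal_loc_le_linear[OF prime principal_mpow principal_mpow] generator(1) q by blast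
qed

lemma val_antimono: "nonzero_principal q \<Longrightarrow> q \<preceq> r \<Longrightarrow> val r \<le> val q"
  by (rule val_le) (meson loc_le_mpow[OF prime] loc_le_trans[OF prime] val_ge)

lemma val_mul_ge:
  assumes q: "nonzero_principal q" and r: "nonzero_principal r"
  shows "val q + val r \<le> val (q \<cdot> r)"
proof -
  have sum: "x + y \<le> val (q \<cdot> r)" if x: "x \<in> val_ratios q" and y: "y \<in> val_ratios r" for x y
  proof -
    obtain a b where ab: "x = real a / real b" "0 < b" "mpow q b \<preceq> mpow t a"
      using x unfolding val_ratios_def by blast
    obtain c d where cd: "y = real c / real d" "0 < d" "mpow r d \<preceq> mpow t c"
      using y unfolding val_ratios_def by blast
    have "mpow q (b * d) \<preceq> mpow t (a * d)" "mpow r (b * d) \<preceq> mpow t (c * b)"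
      using loc_le_mpow[OF prime ab(3), of d] loc_le_mpow[OF prime cd(3), of b]
      by (simp_all add: mpow_mult mult.commute)
    then have "mpow (q \<cdot> r) (b * d) \<preceq> mpow t (a * d + c * b)"
      using loc_le_mul[OF prime] by (simp add: mpow_mul_distrib mpow_add)
    then have "real (a * d + c * b) / real (b * d) \<le> val (q \<cdot> r)"
      using nonzero_principal_mul[OF q r] ab(2) cd(2) by (intro val_ge) simp_all
    moreover have "real (a * d + c * b) / real (b * d) = x + y"
      using ab(1,2) cd(1,2) by (simp add: field_simps)
    ultimately show ?thesis by simp
  qed
  have "val q \<le> val (q \<cdot> r) - val r"
    unfolding val_def[of q]
  proof (rule cSup_least)
    fix x assume x: "x \<in> val_ratios q"
    have "val r \<le> val (q \<cdot> r) - x"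
      unfolding val_def[of r]
    proof (rule cSup_least)
      show "val_ratios r \<noteq> {}" using zero_in_val_ratios by blast
    qed (use sum[OF x] in \<open>simp add: algebra_simps\<close>)
    then show "x \<le> val (q \<cdot> r) - val r" by simp
  qed (use zero_in_val_ratios in blast)
  then show ?thesis by simp
qed

lemma val_mul_le:
  assumes q: "nonzero_principal q" and r: "nonzero_principal r"
  shows "val (q \<cdot> r) \<le> val q + val r"
proof (rule val_le)
  fix a b :: nat assume b: "0 < b" and qr: "mpow (q \<cdot> r) b \<preceq> mpow t a"
  \<comment> \<open>Approximate val q and val r from above by k/n and l/n with n = b N.\<close>
  show "real a / real b \<le> val q + val r"
  proof (rule real_le_if_le_add_div[where c = "2 / real b"])
    fix N :: nat assume N: "0 < N"
    define n where "n = b * N"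
    have n: "0 < n" using b N by (simp add: n_def)
    define k l where "k = nat \<lfloor>real n * val q\<rfloor> + 1" and "l = nat \<lfloor>real n * val r\<rfloor> + 1"
    have k: "real n * val q < real k" "real k \<le> real n * val q + 1"
      using val_nonneg[OF q] unfolding k_def by (auto simp: of_nat_nat) linarith+
    have l: "real n * val r < real l" "real l \<le> real n * val r + 1"
      using val_nonneg[OF r] unfolding l_def by (auto simp: of_nat_nat) linarith+
    have "mpow t k \<preceq> mpow q n" "mpow t l \<preceq> mpow r n"
      using val_gt[OF q n, of k] val_gt[OF r n, of l] k(1) l(1) n by (simp_all add: field_simps)
    then have "mpow t (k + l) \<preceq> mpow (q \<cdot> r) n"
      using loc_le_mul[OF prime] by (simp add: mpow_add mpow_mul_distrib)
    moreover have "mpow (q \<cdot> r) n \<preceq> mpow t (a * N)"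
      using loc_le_mpow[OF prime qr, of N] by (simp add: mpow_mult n_def)
    ultimately have "mpow t (k + l) \<preceq> mpow t (a * N)" by (rule loc_le_trans[OF prime])
    then have "real a * real N \<le> real k + real l"
      by (simp add: mpow_generator_loc_le_iff flip: of_nat_mult of_nat_add)
    also have "\<dots> \<le> real b * real N * (val q + val r) + 2"
      using k(2) l(2) by (simp add: n_def algebra_simps)
    finally have "real a * real N / (real b * real N)
        \<le> (real b * real N * (val q + val r) + 2) / (real b * real N)"
      using b N by (intro divide_right_mono) auto
    then show "real a / real b \<le> val q + val r + 2 / real b / real N"
      using b N by (simp add: field_simps)
  qed
qed

lemma val_mul: "nonzero_principal q \<Longrightarrow> nonzero_principal r \<Longrightarrow> val (q \<cdot> r) = val q + val r"
  using val_mul_le val_mul_ge by (simp add: order.antisym)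

lemma val_top: "val top = 0"
proof (rule order.antisym)
  show "val top \<le> 0"
    by (rule val_le) (metis mpow_top mpow.simps(1) mpow_generator_loc_le_iff le_zero_eq of_nat_0 div_0 order.refl)
  show "0 \<le> val top" using val_nonneg principal_top bot_neq_top by metis
qed

lemma val_generator: "val t = 1"
proof (rule order.antisym)
  show "val t \<le> 1" by (rule val_le) (simp add: mpow_generator_loc_le_iff)
  show "1 \<le> val t" using val_ge[of t 1 1] generator loc_le_refl[OF prime] by simp
qed

lemma val_mpow: "nonzero_principal q \<Longrightarrow> val (mpow q n) = real n * val q"
  by (induction n) (simp_all add: val_top val_mul nonzero_principal_mpow algebra_simps)

lemma val_unit: "nonzero_principal q \<Longrightarrow> \<not> q \<le> p \<Longrightarrow> val q = 0"
  using val_antimono[of top q] val_top val_nonneg[of q] principal_top bot_neq_top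
    compact_not_le_loc_le[of q p top] principal_compact by fastforce

lemma val_pos:
  assumes q: "nonzero_principal q" and qp: "q \<le> p"
  shows "0 < val q"
proof -
  obtain n where n: "\<not> t \<preceq> mpow q n"
    using principal_loc_archimedean[OF prime _ _ qp generator(1,2)] q by blast
  then have "0 < n" using loc_le_of_le[OF prime, of t top] by (cases n) auto
  moreover have "mpow q n \<preceq> mpow t 1"
    using principal_loc_le_linear[OF prime generator(1) principal_mpow] q n by auto
  ultimately have "real 1 / real n \<le> val q" using val_ge q by blast
  moreover have "0 < real 1 / real n" using \<open>0 < n\<close> by simp
  ultimately show ?thesis by linarith
qed

lemma val_decompose:
  assumes q: "nonzero_principal q" and r: "nonzero_principal r" and qr: "q \<preceq> r"
  obtains u where "nonzero_principal u" "q \<preceq> u \<cdot> r" "u \<cdot> r \<le> q" "val q = val u + val r"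
proof -
  obtain u where u: "principal_el mul u" "q \<preceq> u \<cdot> r" "u \<cdot> r \<le> q"
    using principal_loc_dvdE[OF prime _ _ _ qr] q r by blast
  have "u \<noteq> bot" using u(2) q loc_le_bot by force
  have "nonzero_principal (u \<cdot> r)" using nonzero_principal_mul u(1) \<open>u \<noteq> bot\<close> r by blast
  then have "val q = val (u \<cdot> r)"
    using val_antimono q u(2) loc_le_of_le[OF prime u(3)] by (simp add: order.antisym)
  also have "\<dots> = val u + val r" using val_mul u(1) \<open>u \<noteq> bot\<close> r by blast
  finally show ?thesis using that u \<open>u \<noteq> bot\<close> by blast
qed

lemma val_strict:
  assumes q: "nonzero_principal q" and r: "nonzero_principal r" and "q \<preceq> r" "\<not> r \<preceq> q"
  shows "val r < val q"
proof -
  obtain u where u: "nonzero_principal u" "u \<cdot> r \<le> q" "val q = val u + val r"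
    using val_decompose[OF q r \<open>q \<preceq> r\<close>] by blast
  have "u \<le> p"
  proof (rule ccontr)
    assume "\<not> u \<le> p"
    then have "r \<preceq> u \<cdot> r" using compact_not_le_loc_le principal_compact u(1) by blast
    then show False using \<open>\<not> r \<preceq> q\<close> loc_le_trans[OF prime _ loc_le_of_le[OF prime u(2)]] by blast
  qed
  then have "0 < val u" using val_pos u(1) by blast
  then show ?thesis using u(3) by simp
qed

lemma loc_le_iff_val_le:
  assumes q: "nonzero_principal q" and r: "nonzero_principal r"
  shows "q \<preceq> r \<longleftrightarrow> val r \<le> val q"
proof
  show "q \<preceq> r \<Longrightarrow> val r \<le> val q" using val_antimono q by blast
  assume "val r \<le> val q"
  show "q \<preceq> r"
  proof (rule ccontr)
    assume "\<not> q \<preceq> r"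
    then have "r \<preceq> q" using principal_loc_le_linear[OF prime] q r by blast
    then have "val q < val r" using val_strict[OF r q] \<open>\<not> q \<preceq> r\<close> by blast
    with \<open>val r \<le> val q\<close> show False by simp
  qed
qed

definition value_set :: "'a \<Rightarrow> real set" where
  "value_set x = val ` {q. nonzero_principal q \<and> q \<le> x}"

definition value_range :: "real set" where
  "value_range = val ` {q. nonzero_principal q}"

lemma loc_le_imp_le_loc_carrier:
  assumes "y \<in> loc_carrier mul p" "principal_el mul q" "q \<preceq> y"
  shows "q \<le> y"
  using assms principal_le_loc_iff[OF prime] loc_carrier_loc[OF prime] by metis

lemma value_set_subset_iff:
  assumes x: "x \<in> loc_carrier mul p" and y: "y \<in> loc_carrier mul p"
  shows "value_set x \<subseteq> value_set y \<longleftrightarrow> x \<le> y"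
proof
  assume V: "value_set x \<subseteq> value_set y"
  have "q \<le> y" if q: "principal_el mul q" "q \<le> x" for q
  proof (cases "q = bot")
    case False
    then have "val q \<in> value_set y" using V q unfolding value_set_def by auto
    then obtain r where r: "nonzero_principal r" "r \<le> y" "val r = val q"
      unfolding value_set_def by auto
    then have "q \<preceq> r" using loc_le_iff_val_le q False by simp
    then have "q \<preceq> y" using loc_le_trans[OF prime _ loc_le_of_le[OF prime r(2)]] by blast
    then show "q \<le> y" using loc_le_imp_le_loc_carrier[OF y q(1)] by blast
  qed simp
  then have "Sup {q. principal_el mul q \<and> q \<le> x} \<le> y" by (blast intro: Sup_least)
  then show "x \<le> y" by (simp only: Sup_principal_below)
qed (auto simp: value_set_def)

lemma value_set_upsets:
  assumes x: "x \<in> loc_carrier mul p"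
  shows "value_set x \<in> upsets value_range"
  unfolding upsets_def
proof (intro CollectI conjI ballI impI)
  show "value_set x \<subseteq> value_range" unfolding value_set_def value_range_def by auto
  fix u w assume u: "u \<in> value_set x" and w: "w \<in> value_range" and uw: "u \<le> w"
  obtain q where q: "nonzero_principal q" "q \<le> x" "val q = u" using u unfolding value_set_def by auto
  obtain r where r: "nonzero_principal r" "val r = w" using w unfolding value_range_def by auto
  have "r \<preceq> q" using loc_le_iff_val_le q r uw by simp
  then have "r \<preceq> x" using loc_le_trans[OF prime _ loc_le_of_le[OF prime q(2)]] by blast
  then have "r \<le> x" using loc_le_imp_le_loc_carrier[OF x] r by blast
  then show "w \<in> value_set x" using r unfolding value_set_def by auto
qed

lemma loc_le_mul_val_split:
  assumes y: "y \<in> loc_carrier mul p" and q: "nonzero_principal q" "q \<preceq> x \<cdot> y"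
  obtains q1 u where "nonzero_principal q1" "q1 \<le> x" "nonzero_principal u" "u \<le> y"
    "val q = val q1 + val u"
proof -
  define S where "S = {a \<cdot> b |a b. a \<in> {c. principal_el mul c \<and> c \<le> x} \<and> b \<in> {c. principal_el mul c \<and> c \<le> y}}"
  have "x \<cdot> y = Sup S" unfolding S_def Sup_mul_Sup[symmetric] Sup_principal_below ..
  moreover have "\<forall>s\<in>S. principal_el mul s" unfolding S_def using principal_mul by auto
  moreover have "principal_el mul q" "q \<noteq> bot" using q(1) by auto
  ultimately obtain s where s: "s \<in> S" "s \<noteq> bot" "q \<preceq> s"
    using q(2) loc_le_Sup_principalE[OF prime] by metis
  then obtain q1 q2 where q12: "principal_el mul q1" "q1 \<le> x" "principal_el mul q2" "q2 \<le> y"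
    "q1 \<cdot> q2 \<noteq> bot" "q \<preceq> q1 \<cdot> q2"
    unfolding S_def by blast
  then have "q \<preceq> q1" using loc_le_trans[OF prime _ loc_le_of_le[OF prime mul_le_left]] by blast
  moreover have q1: "nonzero_principal q1" using q12 by auto
  ultimately obtain u where u: "nonzero_principal u" "u \<cdot> q1 \<le> q" "val q = val u + val q1"
    using val_decompose[OF q(1)] by blast
  have "u \<cdot> q1 \<preceq> q2 \<cdot> q1"
    using loc_le_trans[OF prime loc_le_of_le[OF prime u(2)] q12(6)] by (simp add: mul.commute)
  then have "u \<preceq> q2" using loc_le_cancel q1 by blast
  then have "u \<preceq> y" using loc_le_trans[OF prime _ loc_le_of_le[OF prime q12(4)]] by blast
  then have "u \<le> y" using loc_le_imp_le_loc_carrier[OF y] u(1) by blast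
  with that q1 q12(2) u(1,3) show ?thesis by (simp add: add.commute)
qed

lemma value_set_loc_mul:
  assumes y: "y \<in> loc_carrier mul p"
  shows "value_set (loc_mul mul p x y) = value_set x + value_set y"
proof (intro set_eqI iffI)
  fix v assume "v \<in> value_set (loc_mul mul p x y)"
  then obtain q where q: "nonzero_principal q" "q \<le> loc mul p (x \<cdot> y)" "v = val q"
    unfolding value_set_def loc_mul_def by auto
  then have "q \<preceq> x \<cdot> y" using principal_le_loc_iff[OF prime] by blast
  then obtain q1 u where "nonzero_principal q1" "q1 \<le> x" "nonzero_principal u" "u \<le> y"
    "val q = val q1 + val u"
    using loc_le_mul_val_split[OF y q(1)] by blast
  then show "v \<in> value_set x + value_set y"
    using q(3) unfolding value_set_def set_plus_def by auto
next
  fix v assume "v \<in> value_set x + value_set y"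
  then obtain q1 q2 where q: "nonzero_principal q1" "q1 \<le> x" "nonzero_principal q2" "q2 \<le> y"
    "v = val q1 + val q2"
    unfolding value_set_def set_plus_def by auto
  have "q1 \<cdot> q2 \<le> loc mul p (x \<cdot> y)"
    using order_trans[OF mul_mono[OF q(2,4)] le_loc[OF prime]] .
  moreover have "val (q1 \<cdot> q2) = v" using val_mul q by simp
  ultimately show "v \<in> value_set (loc_mul mul p x y)"
    unfolding value_set_def loc_mul_def using nonzero_principal_mul q(1,3) by blast
qed

lemma upsets_value_range_subset:
  assumes U: "U \<in> upsets value_range"
  shows "U \<in> value_set ` loc_carrier mul p"
proof -
  define x where "x = loc mul p (Sup {q. nonzero_principal q \<and> val q \<in> U})"
  have "value_set x = U"
  proof (intro set_eqI iffI)
    fix v assume "v \<in> value_set x"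
    then obtain q where q: "nonzero_principal q" "q \<le> x" "v = val q" unfolding value_set_def by auto
    then have "q \<preceq> Sup {q. nonzero_principal q \<and> val q \<in> U}"
      using principal_le_loc_iff[OF prime] x_def by blast
    moreover have "principal_el mul q" "q \<noteq> bot" using q(1) by auto
    ultimately obtain r where "r \<in> {q. nonzero_principal q \<and> val q \<in> U}" "q \<preceq> r"
      using loc_le_Sup_principalE[OF prime] by (metis (no_types, lifting) mem_Collect_eq)
    then have r: "nonzero_principal r" "val r \<in> U" "q \<preceq> r" by auto
    then have "val r \<le> val q" using val_antimono q(1) by blast
    then show "v \<in> U" using U r(2) q(1,3) unfolding upsets_def value_range_def by blast
  next
    fix v assume v: "v \<in> U"
    then obtain q where q: "nonzero_principal q" "val q = v"
      using U unfolding upsets_def value_range_def by auto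
    then have "q \<le> Sup {q. nonzero_principal q \<and> val q \<in> U}" using v by (auto intro: Sup_upper)
    then have "q \<le> x" unfolding x_def using le_loc[OF prime] by (rule order_trans)
    then show "v \<in> value_set x" using q unfolding value_set_def by auto
  qed
  then show ?thesis unfolding x_def loc_carrier_def by blast
qed

lemma value_set_image: "value_set ` loc_carrier mul p = upsets value_range"
  using value_set_upsets upsets_value_range_subset by blast

lemma value_range_Nats:
  assumes uniformizer: "p \<le> loc mul p t"
  shows "value_range = \<nat>"
proof
  show "value_range \<subseteq> \<nat>"
  proof
    fix w assume "w \<in> value_range"
    then obtain q where q: "nonzero_principal q" "w = val q" unfolding value_range_def by auto
    obtain n where "\<not> q \<preceq> mpow t n"
      using principal_loc_archimedean[OF prime generator] q(1) by blast
    then obtain n where n: "\<not> q \<preceq> mpow t n" "\<forall>m<n. q \<preceq> mpow t m"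
      using exists_least_iff[of "\<lambda>n. \<not> q \<preceq> mpow t n"] by blast
    obtain k where k: "n = Suc k"
      using n(1) loc_le_of_le[OF prime, of q top] by (cases n) auto
    then have "q \<preceq> mpow t k" using n(2) by blast
    then obtain u where u: "nonzero_principal u" "q \<preceq> u \<cdot> mpow t k" "val q = val u + val (mpow t k)"
      using val_decompose[OF q(1) nonzero_principal_mpow] generator by blast
    have "\<not> u \<le> p"
    proof
      assume "u \<le> p"
      then have "u \<preceq> t"
        using principal_le_loc_iff[OF prime] u(1) order_trans[OF _ uniformizer] by blast
      then have "u \<cdot> mpow t k \<preceq> mpow t n"
        using loc_le_mul[OF prime _ loc_le_refl[OF prime]] k by simp
      then show False using n(1) loc_le_trans[OF prime u(2)] by blast
    qed
    then have "val q = real k"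
      using u val_unit val_mpow val_generator generator by simp
    then show "w \<in> \<nat>" using q(2) by simp
  qed
  show "\<nat> \<subseteq> value_range"
  proof
    fix w :: real assume "w \<in> \<nat>"
    then obtain n where "w = real n" by (auto elim: Nats_cases)
    then have "w = val (mpow t n)" using val_mpow val_generator generator by simp
    then show "w \<in> value_range"
      unfolding value_range_def using nonzero_principal_mpow generator by blast
  qed
qed

context
  assumes no_uniformizer: "\<not> (\<exists>u. nonzero_principal u \<and> u \<le> p \<and> p \<le> loc mul p u)"
begin

lemma ex_val_le_half:
  assumes q: "nonzero_principal q" "q \<le> p"
  obtains r where "nonzero_principal r" "r \<le> p" "0 < val r" "2 * val r \<le> val q"
proof -
  have "\<not> p \<le> loc mul p q" using no_uniformizer q by blast
  then obtain r where r: "principal_el mul r" "r \<le> p" "\<not> r \<le> loc mul p q"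
    by (rule ex_principal_not_le)
  then have "r \<noteq> bot" "\<not> r \<preceq> q"
    using principal_le_loc_iff[OF prime r(1)] bot_least[of "loc mul p q"] by (fastforce, simp)
  then have "q \<preceq> r" using principal_loc_le_linear[OF prime] q r(1) by blast
  then obtain u where u: "nonzero_principal u" "val q = val u + val r"
    using val_decompose q(1) r(1) \<open>r \<noteq> bot\<close> by metis
  have "0 < val r" using val_pos r(1,2) \<open>r \<noteq> bot\<close> by blast
  moreover have "val r < val q"
    using val_strict q(1) r(1) \<open>r \<noteq> bot\<close> \<open>q \<preceq> r\<close> \<open>\<not> r \<preceq> q\<close> by blast
  then have "0 < val u" using u(2) by simp
  then have "u \<le> p" using val_unit u(1) by fastforce
  ultimately show ?thesis
    using that[of r] that[of u] u r(1,2) \<open>r \<noteq> bot\<close> \<open>0 < val u\<close> by (cases "val r \<le> val u") auto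
qed

lemma ex_small_val: "\<exists>q. nonzero_principal q \<and> q \<le> p \<and> 0 < val q \<and> val q \<le> 1 / 2 ^ k"
proof (induction k)
  case 0
  show ?case using generator val_generator by (intro exI[of _ t]) simp
next
  case (Suc k)
  then obtain q where q: "nonzero_principal q" "q \<le> p" "0 < val q" "val q \<le> 1 / 2 ^ k" by blast
  obtain r where r: "nonzero_principal r" "r \<le> p" "0 < val r" "2 * val r \<le> val q"
    using ex_val_le_half[OF q(1,2)] by blast
  have "2 * val r * 2 ^ k \<le> val q * 2 ^ k" using r(4) by (intro mult_right_mono) auto
  moreover have "val q * 2 ^ k \<le> 1" using q(4) by (simp add: field_simps)
  moreover have "val r * 2 ^ Suc k = 2 * val r * 2 ^ k" by simp
  ultimately have "val r * 2 ^ Suc k \<le> 1" by linarith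
  then have "val r \<le> 1 / 2 ^ Suc k" by (simp add: field_simps)
  with r show ?case by blast
qed

lemma ex_val_between:
  assumes "0 \<le> x" "0 < e"
  obtains q where "nonzero_principal q" "x < val q" "val q < x + e"
proof -
  obtain k :: nat where "1 / e < k" using reals_Archimedean2 by blast
  moreover have "real k < 2 ^ k" by (rule of_nat_less_two_power)
  ultimately have "1 / e < 2 ^ k" by linarith
  then have "1 / 2 ^ k < e" using assms(2) by (simp add: field_simps)
  then obtain q where q: "nonzero_principal q" "0 < val q" "val q < e"
    using ex_small_val[of k] by fastforce
  define n where "n = nat \<lfloor>x / val q\<rfloor> + 1"
  have "x / val q < real n" "real n \<le> x / val q + 1"
    unfolding n_def using assms(1) q(2) by (simp_all add: of_nat_nat) linarith+
  then have "x < real n * val q" "real n * val q \<le> x + val q"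
    using q(2) by (simp_all add: field_simps)
  moreover have "val (mpow q n) = real n * val q" using val_mpow q(1) by simp
  ultimately show ?thesis using that[of "mpow q n"] nonzero_principal_mpow[OF q(1)] q(3) by simp
qed

lemma val_le_if_loc_above:
  assumes c: "0 \<le> c" and le: "Sup {q. nonzero_principal q \<and> c < val q} \<le> loc mul p \<beta>"
  shows "val \<beta> \<le> c"
proof (rule ccontr)
  assume "\<not> val \<beta> \<le> c"
  then obtain q where q: "nonzero_principal q" "c < val q" "val q < val \<beta>"
    using ex_val_between[OF c, of "val \<beta> - c"] by auto
  then have "q \<le> loc mul p \<beta>" by (intro order_trans[OF Sup_upper le]) simp
  then have "val \<beta> \<le> val q" using principal_le_loc_iff[OF prime] val_antimono q(1) by blast
  with q(3) show False by simp
qed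

lemma nonneg_in_value_range:
  assumes x: "0 \<le> x"
  shows "x \<in> value_range"
proof -
  \<comment> \<open>Split g = t^N locally into factors of value at most x and at most N - x.\<close>
  define N where "N = nat \<lceil>x\<rceil> + 1"
  define y where "y = real N - x"
  have y: "0 < y" unfolding y_def N_def by linarith
  define g where "g = mpow t N"
  have g: "nonzero_principal g" "val g = x + y"
    unfolding g_def y_def using nonzero_principal_mpow val_mpow val_generator generator by auto
  have "q1 \<cdot> q2 \<le> loc mul p g"
    if "nonzero_principal q1" "x < val q1" "nonzero_principal q2" "y < val q2" for q1 q2
  proof -
    have "q1 \<cdot> q2 \<preceq> g"
      using that loc_le_iff_val_le[OF nonzero_principal_mul g(1)] val_mul g(2) by simp
    then show ?thesis using principal_le_loc_iff[OF prime] principal_mul that by blast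
  qed
  then have "Sup {q. nonzero_principal q \<and> x < val q} \<cdot> Sup {q. nonzero_principal q \<and> y < val q}
      \<le> loc mul p g"
    unfolding Sup_mul_Sup by (blast intro: Sup_least)
  then obtain \<beta>1 \<beta>2 where \<beta>: "principal_el mul \<beta>1" "principal_el mul \<beta>2"
    "Sup {q. nonzero_principal q \<and> x < val q} \<le> loc mul p \<beta>1"
    "Sup {q. nonzero_principal q \<and> y < val q} \<le> loc mul p \<beta>2"
    "\<beta>1 \<cdot> \<beta>2 \<preceq> g" "g \<preceq> \<beta>1 \<cdot> \<beta>2"
    using sharp_loc_factorization[OF prime] g(1) by blast
  have "\<beta>1 \<cdot> \<beta>2 \<noteq> bot" using \<beta>(6) g(1) loc_le_bot by force
  then have \<beta>0: "\<beta>1 \<noteq> bot" "\<beta>2 \<noteq> bot" by auto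
  have "val g \<le> val \<beta>1 + val \<beta>2"
    using val_antimono[OF nonzero_principal_mul \<beta>(5)] val_mul \<beta>(1,2) \<beta>0 by simp
  moreover have "val \<beta>1 \<le> x" "val \<beta>2 \<le> y"
    using val_le_if_loc_above x y \<beta>(3,4) by auto
  ultimately have "val \<beta>1 = x" using g(2) by simp
  then show ?thesis unfolding value_range_def using \<beta>(1) \<beta>0 by blast
qed

lemma value_range_nonneg: "value_range = {0..}"
  unfolding value_range_def using val_nonneg nonneg_in_value_range[unfolded value_range_def]
  by fastforce

end

end

context sharp_domain
begin

lemma loc_isomorphic_Zminus_or_R1:
  assumes p: "prime_el mul p" "p \<noteq> bot"
  shows "mlat_isomorphic (loc_carrier mul p) (\<le>) (loc_mul mul p) Zminus (\<le>) (+)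
    \<or> mlat_isomorphic (loc_carrier mul p) (\<le>) (loc_mul mul p) R1 (\<subseteq>) set_add"
proof (cases "\<exists>u. principal_el mul u \<and> u \<noteq> bot \<and> u \<le> p \<and> p \<le> loc mul p u")
  case True
  then obtain u where u: "principal_el mul u" "u \<noteq> bot" "u \<le> p" "p \<le> loc mul p u" by blast
  interpret valuation mul p u using p(1) u by unfold_locales auto
  have "mlat_isomorphic (loc_carrier mul p) (\<le>) (loc_mul mul p) Zminus (\<le>) (+)"
  proof (rule mlat_isomorphic_Zminus)
    show "value_set ` loc_carrier mul p = upsets \<nat>"
      using value_set_image value_range_Nats[OF u(4)] by simp
  qed (simp_all only: value_set_subset_iff value_set_loc_mul)
  then show ?thesis ..
next
  case False
  have "\<not> p \<le> bot" using p(2) by (simp add: bot_unique)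
  then obtain t where t: "principal_el mul t" "t \<le> p" "\<not> t \<le> bot" by (rule ex_principal_not_le)
  interpret valuation mul p t using p(1) t by unfold_locales auto
  have "mlat_isomorphic (loc_carrier mul p) (\<le>) (loc_mul mul p) R1 (\<subseteq>) set_add"
  proof (rule mlat_isomorphic_R1)
    show "value_set ` loc_carrier mul p = upsets {0..}"
      using value_set_image value_range_nonneg False by auto
  qed (simp_all only: value_set_subset_iff value_set_loc_mul)
  then show ?thesis ..
qed

end

theorem theorem3p9:
  fixes mul :: "'a::complete_lattice \<Rightarrow> 'a \<Rightarrow> 'a"
  assumes "C_lattice mul"
    and "lattice_domain mul"
    and "\<exists>x::'a. x \<noteq> bot \<and> x \<noteq> top"
    and "sharp mul"
    and "\<forall>x::'a. \<exists>S. (\<forall>s\<in>S. principal_el mul s) \<and> x = Sup S"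
  shows "(\<forall>m::'a. maximal_el m \<longrightarrow>
            mlat_isomorphic (loc_carrier mul m) (\<le>) (loc_mul mul m) Zminus (\<le>) (+)
          \<or> mlat_isomorphic (loc_carrier mul m) (\<le>) (loc_mul mul m) R1 (\<subseteq>) set_add)
         \<and> Pruefer_1dim mul"
proof -
  interpret sharp_domain mul
    using assms by unfold_locales (auto simp: C_lattice_def)
  have "m \<noteq> bot" if "maximal_el m" for m :: 'a
    using that assms(3) unfolding maximal_el_def by auto
  then show ?thesis
    using loc_isomorphic_Zminus_or_R1 maximal_el_imp_prime_el Pruefer_1dim by blast
qed

end
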